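(* Under the standing setting of the context, let $\tau$ be a conforming tree and $\mathbf k$ a finite multiset of elements of $\mathbb N^d$ with $|\mathbf k|\ge1$ and $D^{\mathbf k}\Upsilon^\tau\ne0$. Assume that $|\mathbf k|=1$ or $\beta\le-1$. Then $|\tau|_{\mathfrak s}>|\mathbf k|_{\mathfrak s}-2$.
   Context: Standing setting. Integers $d\ge2$, $n\ge1$; $E$ a finite-dimensional real normed space; $\beta<0$. Scaling $\mathfrak s=(2,1,\dots,1)$, $|k|_{\mathfrak s}=2k_1+k_2+\dots+k_d$ for $k\in\mathbb N^d$; $\mathbb N^d_{<2}=\{k:|k|_{\mathfrak s}<2\}$. Jets: $\widehat{\mathcal J}=E^{\mathbb N^d}$, elements $\boldsymbol\phi=(\nabla^k\phi)_{k\in\mathbb N^d}$; $\mathcal J=E^{\mathbb N^d_{<2}}$, written $\boldsymbol\phi=(\phi,\nabla\phi)$; functions on $\mathcal J$ are viewed as functions on $\widehat{\mathcal J}$ depending on finitely many components. $P:\mathcal J\to E$ is a polynomial such that for some integer $p\ge2$ and linear $F:E^{\otimes p}\to E$, either $P(\boldsymbol\phi)=F(\phi^{\otimes p})$, or $q=(p-1)/2$ is an integer and $P(\boldsymbol\phi)=F(\phi^{\otimes p})+B(\nabla\phi\otimes\phi^{\otimes q})$ for a linear $B$; $\alpha=2/(p-1)$. $f=(f_1,\dots,f_n):\mathcal J\to L(\mathbb R^n,E)$ is smooth. Subcriticality: if $f$ is constant, $\beta>-\alpha-2$; if $f$ is non-constant but independent of $\nabla\phi$, $\beta>-2$; if $f$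 depends on $\nabla\phi$, $\beta>-1$. Derivatives: for $\ell\in\mathbb N^d$, $D^\ell g$ is the derivative of $g$ in the $\ell$-th jet component; for a multiset $\mathbf k=\{k_1,\dots,k_r\}$ of elements of $\mathbb N^d$, $D^{\mathbf k}=D^{k_1}\cdots D^{k_r}$ (values multilinear maps), $|\mathbf k|=r$, $|\mathbf k|_{\mathfrak s}=\sum|k_i|_{\mathfrak s}$; for $i\in[d]$ (unit vector $e_i$), $\partial^ig(\boldsymbol\phi)=\sum_{\ell}D^\ell g(\boldsymbol\phi)(\nabla^{\ell+e_i}\phi)$, and $\partial^k$ is the corresponding composition. Trees: rooted trees with a polynomial label in $\mathbb N^d$ and a noise label in $\{0,\dots,n\}$ on each vertex and a derivative label in $\mathbb N^d$ on each edge, written uniquely (unordered product) as $\tau=X^k\Xi_j\prod_{i=1}^\ell\mathcal I^{k_i}[\tau_i]$: root with polynomial label $k$, noise label $j$, and $\ell$ edges with labels $k_i$ to the roots of subtrees $\tau_i$; $\Xi_0$ is also written $\mathbf 1$. Rules: $\mathfrak R_0=\{\mathbf k: D^{\mathbf k}P\ne0\}$; for $j\ge1$, $\mathfrak R_j=\emptyset$ if $f$ is constant, $\mathfrak R_j=\{\mathbf k:\text{all elements are }0\}$ if $f$ is non-constant and independent of $\nabla\phi$, $\mathfrak R_j=\{\mathbf k:|k|_{\mathfrak s}\le1\ \forall k\in\mathbf k\}$ if $f$ depends on $\nabla\phi$. $\tau$ is conforming if every $\tau_i$ is conforming and $\{k_1,\dots,k_\ell\}\in\mathfrak R_j$ (so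 every $X^k\Xi_j$ is conforming). Homogeneity: $|\Xi_j|_{\mathfrak s}=\beta$ ($j\ge1$), $|\mathbf 1|_{\mathfrak s}=0$, $|X^k\tau|_{\mathfrak s}=|k|_{\mathfrak s}+|\tau|_{\mathfrak s}$, $|\tau\sigma|_{\mathfrak s}=|\tau|_{\mathfrak s}+|\sigma|_{\mathfrak s}$, $|\mathcal I^k[\tau]|_{\mathfrak s}=|\tau|_{\mathfrak s}+2-|k|_{\mathfrak s}$. Elementary differentials $\Upsilon^\tau:\widehat{\mathcal J}\to E$: $\Upsilon^{\Xi_j}=f_j$ ($j\ge1$), $\Upsilon^{\mathbf 1}=P$, and for $\tau=X^k\Xi_j\prod_{i=1}^\ell\mathcal I^{k_i}[\sigma_i]$, $\Upsilon^\tau(\boldsymbol\phi)=\{\partial^k(D^{k_1}\cdots D^{k_\ell}\Upsilon^{\Xi_j})\}(\boldsymbol\phi)(\Upsilon^{\sigma_1}(\boldsymbol\phi),\dots,\Upsilon^{\sigma_\ell}(\boldsymbol\phi))$. *)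

theory Defs
  imports "HOL-Analysis.Analysis"
begin

text \<open>Multi-indices k in N^d are represented as lists of naturals of length d;
  position 0 is the time coordinate (scaling 2), positions 1..d-1 are spatial.\<close>

type_synonym mi = "nat list"

definition mindex :: "nat \<Rightarrow> mi set" where
  "mindex d = {k. length k = d}"

definition sdeg :: "mi \<Rightarrow> nat" where
  "sdeg k = (if k = [] then 0 else 2 * hd k + sum_list (tl k))"

definition sdeg_list :: "mi list \<Rightarrow> nat" where
  "sdeg_list ks = sum_list (map sdeg ks)"

definition zero_mi :: "nat \<Rightarrow> mi" where
  "zero_mi d = replicate d 0"

definition unit_mi :: "nat \<Rightarrow> nat \<Rightarrow> mi" where
  "unit_mi d i = (replicate d 0)[i := 1]"

definition add_unit :: "nat \<Rightarrow> mi \<Rightarrow> mi" where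
  "add_unit i l = l[i := l ! i + 1]"

definition Jidx :: "nat \<Rightarrow> mi set" where
  "Jidx d = {k \<in> mindex d. sdeg k < 2}"

type_synonym 'e jet = "mi \<Rightarrow> 'e"

text \<open>A multilinear-map-valued function on jets is a function
  'e jet \<Rightarrow> 'e list \<Rightarrow> 'e, the list holding the arguments of the multilinear map.
  D^{k_1} ... D^{k_r} G: the first argument belongs to the outermost derivative.\<close>

fun Dks :: "mi list \<Rightarrow> ('e::real_normed_vector jet \<Rightarrow> 'e list \<Rightarrow> 'e) \<Rightarrow> 'e jet \<Rightarrow> 'e list \<Rightarrow> 'e" where
  "Dks [] G = G"
| "Dks (k # ks) G = (\<lambda>\<phi> hs. vector_derivative
       (\<lambda>t::real. Dks ks G (\<phi>(k := \<phi> k + t *\<^sub>R hd hs)) (tl hs)) (at 0))"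

definition lift :: "('e jet \<Rightarrow> 'e) \<Rightarrow> 'e jet \<Rightarrow> 'e list \<Rightarrow> 'e" where
  "lift g = (\<lambda>\<phi> hs. g \<phi>)"

definition Dnonzero :: "mi list \<Rightarrow> ('e::real_normed_vector jet \<Rightarrow> 'e list \<Rightarrow> 'e) \<Rightarrow> bool" where
  "Dnonzero ks G \<longleftrightarrow> (\<exists>\<phi> hs. length hs = length ks \<and> Dks ks G \<phi> hs \<noteq> 0)"

definition pd :: "nat \<Rightarrow> nat \<Rightarrow> ('e::euclidean_space jet \<Rightarrow> 'e list \<Rightarrow> 'e) \<Rightarrow> 'e jet \<Rightarrow> 'e list \<Rightarrow> 'e" where
  "pd d i G = (\<lambda>\<phi> hs. infsum (\<lambda>l. Dks [l] G \<phi> (\<phi> (add_unit i l) # hs)) (mindex d))"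

definition pdk :: "nat \<Rightarrow> mi \<Rightarrow> ('e::euclidean_space jet \<Rightarrow> 'e list \<Rightarrow> 'e) \<Rightarrow> 'e jet \<Rightarrow> 'e list \<Rightarrow> 'e" where
  "pdk d k G = foldr (\<lambda>i H. (pd d i ^^ (k ! i)) H) [0..<d] G"

definition smooth_jet :: "nat \<Rightarrow> ('e::real_normed_vector jet \<Rightarrow> 'e) \<Rightarrow> bool" where
  "smooth_jet d g \<longleftrightarrow>
    (\<forall>ks hs. set ks \<subseteq> mindex d \<longrightarrow>
       continuous_on UNIV (\<lambda>\<phi>. Dks ks (lift g) \<phi> hs) \<and>
       (\<forall>k h \<phi>. k \<in> mindex d \<longrightarrow>
          ((\<lambda>t::real. Dks ks (lift g) (\<phi>(k := \<phi> k + t *\<^sub>R h)) hs)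
             has_vector_derivative Dks (k # ks) (lift g) \<phi> (h # hs)) (at 0)))"

definition on_J :: "nat \<Rightarrow> ('e jet \<Rightarrow> 'a) \<Rightarrow> bool" where
  "on_J d g \<longleftrightarrow> (\<forall>\<phi> \<psi>. (\<forall>l\<in>Jidx d. \<phi> l = \<psi> l) \<longrightarrow> g \<phi> = g \<psi>)"

definition multilin :: "nat \<Rightarrow> ('e::real_vector list \<Rightarrow> 'e) \<Rightarrow> bool" where
  "multilin m F \<longleftrightarrow> (\<forall>xs i. length xs = m \<longrightarrow> i < m \<longrightarrow> linear (\<lambda>x. F (xs[i := x])))"

text \<open>F(phi^{\<otimes>p}), F a linear map on E^{\<otimes>p} = multilinear map on E^p\<close>
definition Fterm :: "nat \<Rightarrow> nat \<Rightarrow> ('e list \<Rightarrow> 'e) \<Rightarrow> 'e jet \<Rightarrow> 'e" where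
  "Fterm d p F \<phi> = F (replicate p (\<phi> (zero_mi d)))"

text \<open>B(nabla phi \<otimes> phi^{\<otimes>q}), a linear map on E^{d-1} \<otimes> E^{\<otimes>q} given by its
  components B_i (i = 1..d-1) which are multilinear maps on E^{q+1}\<close>
definition Bterm :: "nat \<Rightarrow> nat \<Rightarrow> (nat \<Rightarrow> 'e list \<Rightarrow> 'e) \<Rightarrow> 'e::real_vector jet \<Rightarrow> 'e" where
  "Bterm d q B \<phi> = (\<Sum>i\<in>{1..<d}. B i (\<phi> (unit_mi d i) # replicate q (\<phi> (zero_mi d))))"

definition f_const :: "nat \<Rightarrow> (nat \<Rightarrow> 'e jet \<Rightarrow> 'e) \<Rightarrow> bool" where
  "f_const n f \<longleftrightarrow> (\<forall>j\<in>{1..n}. \<forall>\<phi> \<psi>. f j \<phi> = f j \<psi>)"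

definition f_indep_grad :: "nat \<Rightarrow> nat \<Rightarrow> (nat \<Rightarrow> 'e jet \<Rightarrow> 'e) \<Rightarrow> bool" where
  "f_indep_grad d n f \<longleftrightarrow>
     (\<forall>j\<in>{1..n}. \<forall>\<phi> \<psi>. \<phi> (zero_mi d) = \<psi> (zero_mi d) \<longrightarrow> f j \<phi> = f j \<psi>)"

text \<open>Node k j cs = X^k Xi_j prod_i I^{k_i}[tau_i] with cs = [(k_1,tau_1),...].
  The product is unordered; the order in the list is irrelevant.\<close>
datatype tree = Node mi nat "(mi \<times> tree) list"

fun hom :: "real \<Rightarrow> tree \<Rightarrow> real" where
  "hom \<beta> (Node k j cs) = real (sdeg k) + (if j \<ge> 1 then \<beta> else 0)
     + sum_list (map (\<lambda>c. hom \<beta> (snd c) + 2 - real (sdeg (fst c))) cs)"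

definition Ups_base :: "('e jet \<Rightarrow> 'e) \<Rightarrow> (nat \<Rightarrow> 'e jet \<Rightarrow> 'e) \<Rightarrow> nat \<Rightarrow> 'e jet \<Rightarrow> 'e" where
  "Ups_base P f j = (if j = 0 then P else f j)"

fun Ups :: "nat \<Rightarrow> ('e::euclidean_space jet \<Rightarrow> 'e) \<Rightarrow> (nat \<Rightarrow> 'e jet \<Rightarrow> 'e) \<Rightarrow> tree \<Rightarrow> 'e jet \<Rightarrow> 'e" where
  "Ups d P f (Node k j cs) = (\<lambda>\<phi>.
     pdk d k (Dks (map fst cs) (lift (Ups_base P f j))) \<phi>
       (map (\<lambda>c. Ups d P f (snd c) \<phi>) cs))"

text \<open>Rules R_j (as predicates on lists of edge labels; order irrelevant)\<close>
definition rule :: "nat \<Rightarrow> nat \<Rightarrow> ('e::euclidean_space jet \<Rightarrow> 'e) \<Rightarrow> (nat \<Rightarrow> 'e jet \<Rightarrow> 'e) \<Rightarrow> nat \<Rightarrow> mi list \<Rightarrow> bool" where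
  "rule d n P f j ks \<longleftrightarrow>
     (if j = 0 then Dnonzero ks (lift P)
      else if f_const n f then ks = []
      else if f_indep_grad d n f then (\<forall>k\<in>set ks. k = zero_mi d)
      else (\<forall>k\<in>set ks. sdeg k \<le> 1))"

fun conforming :: "nat \<Rightarrow> nat \<Rightarrow> ('e::euclidean_space jet \<Rightarrow> 'e) \<Rightarrow> (nat \<Rightarrow> 'e jet \<Rightarrow> 'e) \<Rightarrow> tree \<Rightarrow> bool" where
  "conforming d n P f (Node k j cs) \<longleftrightarrow>
     k \<in> mindex d \<and> j \<le> n \<and> set (map fst cs) \<subseteq> mindex d \<and>
     (cs = [] \<or> rule d n P f j (map fst cs)) \<and>
     (\<forall>c\<in>set cs. conforming d n P f (snd c))"

end

theory Submission
  imports Defs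
begin

text \<open>Give the direction \<open>l\<close> of a derivative the weight \<open>a + |l|\<^sub>\<s>\<close>. The functions \<open>P\<close> and
  \<open>f\<^sub>j\<close> only have nonvanishing derivatives of bounded total weight, and by the Leibniz rule a
  nonvanishing derivative of \<open>\<Upsilon>\<^sup>\<tau>\<close> splits into nonvanishing derivatives of the ingredients
  at the vertices of \<open>\<tau>\<close>; each \<open>\<partial>\<^sup>i\<close> adds at most \<open>|e\<^sub>i|\<^sub>\<s>\<close> to the weight as long as
  \<open>a \<ge> -1\<close>. This bounds the weight of any nonvanishing \<open>D\<^sup>k\<^sup>s \<Upsilon>\<^sup>\<tau>\<close> by a quantity computed
  recursively on \<open>\<tau>\<close>, which the subcriticality conditions compare with \<open>|\<tau>|\<^sub>\<s>\<close>: one takes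
  \<open>a = -1\<close> when \<open>|k| = 1\<close> or \<open>f\<close> depends on \<open>\<nabla>\<phi>\<close>, \<open>a = 0\<close> when \<open>f\<close> depends on \<open>\<phi>\<close> only,
  and \<open>a = \<alpha>\<close> when \<open>f\<close> is constant.\<close>

lemma Dks_append: "Dks (ks @ ks') G = Dks ks (Dks ks' G)"
  by (induction ks) auto

declare Dks.simps(2)[simp del]

lemma Dks_Cons: "Dks (k # ks) G \<phi> hs =
   vector_derivative (\<lambda>t::real. Dks ks G (\<phi>(k := \<phi> k + t *\<^sub>R hd hs)) (tl hs)) (at 0)"
  by (simp add: Dks.simps(2))

definition depends_on :: "mi set \<Rightarrow> ('e jet \<Rightarrow> 'a) \<Rightarrow> bool" where
  "depends_on S G \<longleftrightarrow> (\<forall>\<phi> \<psi>. (\<forall>l\<in>S. \<phi> l = \<psi> l) \<longrightarrow> G \<phi> = G \<psi>)"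

lemma depends_on_Dks:
  fixes G :: "'e::real_normed_vector jet \<Rightarrow> 'e list \<Rightarrow> 'e"
  assumes "depends_on S G"
  shows "depends_on S (Dks ks G)"
proof (induction ks)
  case Nil
  show ?case using assms by simp
next
  case (Cons k ks)
  show ?case unfolding depends_on_def
  proof (intro allI impI)
    fix \<phi> \<psi> :: "'e jet" assume agree: "\<forall>l\<in>S. \<phi> l = \<psi> l"
    have "Dks ks G (\<phi>(k := \<phi> k + x)) = Dks ks G (\<psi>(k := \<psi> k + x))" for x
      using Cons agree unfolding depends_on_def by simp
    then show "Dks (k # ks) G \<phi> = Dks (k # ks) G \<psi>" by (intro ext) (simp add: Dks_Cons)
  qed
qed

lemma Dks_Cons_eq_0_if_not_depends:
  fixes G :: "'e::real_normed_vector jet \<Rightarrow> 'e list \<Rightarrow> 'e"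
  assumes "depends_on S G" "k \<notin> S"
  shows "Dks (k # ks) G \<phi> hs = 0"
proof -
  have "Dks ks G (\<phi>(k := \<phi> k + t *\<^sub>R hd hs)) = Dks ks G \<phi>" for t
    using depends_on_Dks[OF assms(1), of ks] assms(2) unfolding depends_on_def by auto
  then show ?thesis by (simp add: Dks_Cons)
qed

lemma Dks_eq_0:
  fixes G :: "'e::real_normed_vector jet \<Rightarrow> 'e list \<Rightarrow> 'e"
  assumes "\<And>\<phi> hs. G \<phi> hs = 0"
  shows "Dks ks G \<phi> hs = 0"
  using assms by (induction ks arbitrary: \<phi> hs) (auto simp: Dks_Cons)

text \<open>In \<open>Dks ks G \<phi> hs\<close> the first \<open>length ks\<close> entries of \<open>hs\<close> are the derivative
  directions; \<open>m\<close> counts the remaining arguments, those of \<open>G\<close> itself.\<close>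

definition Dnonzero_ar :: "nat \<Rightarrow> mi list \<Rightarrow> ('e::real_normed_vector jet \<Rightarrow> 'e list \<Rightarrow> 'e) \<Rightarrow> bool" where
  "Dnonzero_ar m ks G \<longleftrightarrow> (\<exists>\<phi> hs. length hs = length ks + m \<and> Dks ks G \<phi> hs \<noteq> 0)"

lemma Dnonzero_ar_0: "Dnonzero_ar 0 ks G = Dnonzero ks G"
  unfolding Dnonzero_def Dnonzero_ar_def by simp

lemma Dnonzero_ar_Dks: "Dnonzero_ar (m + length kk) ks (Dks kk G) \<Longrightarrow> Dnonzero_ar m (ks @ kk) G"
  unfolding Dnonzero_ar_def by (fastforce simp: Dks_append ac_simps)

lemma Dnonzero_ar_subset_if_depends_on:
  assumes "depends_on S G" "Dnonzero_ar m ks G"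
  shows "set ks \<subseteq> S"
proof
  fix k assume "k \<in> set ks"
  then obtain ks1 ks2 where ks: "ks = ks1 @ k # ks2" by (meson split_list)
  show "k \<in> S"
  proof (rule ccontr)
    assume "k \<notin> S"
    then have "Dks (k # ks2) G \<phi> hs = 0" for \<phi> hs
      using Dks_Cons_eq_0_if_not_depends assms(1) by blast
    then have "Dks ks G \<phi> hs = 0" for \<phi> hs
      unfolding ks Dks_append by (rule Dks_eq_0)
    then show False using assms(2) unfolding Dnonzero_ar_def by blast
  qed
qed

definition jet_differentiable :: "nat \<Rightarrow> nat \<Rightarrow> ('e::real_normed_vector jet \<Rightarrow> 'e list \<Rightarrow> 'e) \<Rightarrow> bool" where
  "jet_differentiable d m G \<longleftrightarrow>
    (\<forall>ks hs \<phi> k h. set ks \<subseteq> mindex d \<longrightarrow> k \<in> mindex d \<longrightarrow> length hs = length ks + m \<longrightarrow>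
      ((\<lambda>t. Dks ks G (\<phi>(k := \<phi> k + t *\<^sub>R h)) hs) has_vector_derivative Dks (k # ks) G \<phi> (h # hs)) (at 0))"

definition jet_multilinear :: "nat \<Rightarrow> nat \<Rightarrow> ('e::real_normed_vector jet \<Rightarrow> 'e list \<Rightarrow> 'e) \<Rightarrow> bool" where
  "jet_multilinear d m G \<longleftrightarrow>
    (\<forall>ks hs \<phi> i. set ks \<subseteq> mindex d \<longrightarrow> length hs = length ks + m \<longrightarrow> i < length hs \<longrightarrow>
      linear (\<lambda>x. Dks ks G \<phi> (hs[i := x])))"

definition jet_regular :: "nat \<Rightarrow> nat \<Rightarrow> ('e::real_normed_vector jet \<Rightarrow> 'e list \<Rightarrow> 'e) \<Rightarrow> bool" where
  "jet_regular d m G \<longleftrightarrow>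
    (\<exists>S. finite S \<and> depends_on S G) \<and> jet_differentiable d m G \<and> jet_multilinear d m G"

lemma jet_regularD:
  assumes "jet_regular d m G"
  shows "\<exists>S. finite S \<and> depends_on S G" "jet_differentiable d m G" "jet_multilinear d m G"
  using assms unfolding jet_regular_def by auto

lemma linear_vector_derivative:
  fixes A :: "real \<Rightarrow> 'a::real_normed_vector \<Rightarrow> 'b::real_normed_vector"
  assumes deriv: "\<And>x. ((\<lambda>t. A t x) has_vector_derivative A' x) (at 0)"
    and lin: "\<And>t. linear (A t)"
  shows "linear A'"
proof (rule linearI)
  fix x y
  have "((\<lambda>t. A t x + A t y) has_vector_derivative A' x + A' y) (at 0)"
    using deriv by (intro has_vector_derivative_add)
  moreover have "(\<lambda>t. A t x + A t y) = (\<lambda>t. A t (x + y))"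
    using lin by (simp add: linear_add)
  ultimately show "A' (x + y) = A' x + A' y"
    using deriv[of "x + y"] vector_derivative_unique_at by metis
next
  fix c :: real and x
  have "((\<lambda>t. c *\<^sub>R A t x) has_vector_derivative c *\<^sub>R A' x) (at 0)"
    using deriv by (intro bounded_linear.has_vector_derivative[OF bounded_linear_scaleR_right])
  moreover have "(\<lambda>t. c *\<^sub>R A t x) = (\<lambda>t. A t (c *\<^sub>R x))"
    using lin by (simp add: linear_scale)
  ultimately show "A' (c *\<^sub>R x) = c *\<^sub>R A' x"
    using deriv[of "c *\<^sub>R x"] vector_derivative_unique_at by metis
qed

lemma linear_Dks_Cons_tail:
  assumes deriv: "\<And>\<psi> x. ((\<lambda>t. Dks ks G (\<psi>(k := \<psi> k + t *\<^sub>R h)) (hs[i := x])) has_vector_derivative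
                 Dks (k # ks) G \<psi> (h # hs[i := x])) (at 0)"
    and lin: "\<And>\<psi>. linear (\<lambda>x. Dks ks G \<psi> (hs[i := x]))"
  shows "linear (\<lambda>x. Dks (k # ks) G \<phi> ((h # hs)[Suc i := x]))"
  using linear_vector_derivative[where A = "\<lambda>t x. Dks ks G (\<phi>(k := \<phi> k + t *\<^sub>R h)) (hs[i := x])",
      OF deriv lin]
  by (simp add: Dks_Cons)

text \<open>Linearity in a later argument of \<open>Dks (k # ks) G\<close> is inherited from \<open>Dks ks G\<close>
  by differentiation, so only linearity in the new first argument has to be proved.\<close>

lemma jet_multilinear_if_first:
  fixes G :: "'e::real_normed_vector jet \<Rightarrow> 'e list \<Rightarrow> 'e"
  assumes diff: "jet_differentiable d m G"
    and base: "\<And>\<phi> hs i. length hs = m \<Longrightarrow> i < m \<Longrightarrow> linear (\<lambda>x. G \<phi> (hs[i := x]))"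
    and first: "\<And>k ks \<phi> hs. k \<in> mindex d \<Longrightarrow> set ks \<subseteq> mindex d \<Longrightarrow> length hs = length ks + m \<Longrightarrow>
       linear (\<lambda>h. Dks (k # ks) G \<phi> (h # hs))"
  shows "jet_multilinear d m G"
proof -
  have "\<forall>\<phi> hs i. length hs = length ks + m \<longrightarrow> i < length hs \<longrightarrow> linear (\<lambda>x. Dks ks G \<phi> (hs[i := x]))"
    if "set ks \<subseteq> mindex d" for ks
    using that
  proof (induction ks)
    case Nil
    then show ?case using base by simp
  next
    case (Cons k ks)
    have k: "k \<in> mindex d" and ks: "set ks \<subseteq> mindex d" using Cons.prems by auto
    show ?case
    proof (intro allI impI)
      fix \<phi> and hs :: "'e list" and i
      assume len: "length hs = length (k # ks) + m" and i: "i < length hs"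
      then obtain h0 hs' where hs: "hs = h0 # hs'" and len': "length hs' = length ks + m"
        by (cases hs) auto
      show "linear (\<lambda>x. Dks (k # ks) G \<phi> (hs[i := x]))"
      proof (cases i)
        case 0
        then show ?thesis using first[OF k ks len'] hs by simp
      next
        case (Suc i')
        have "linear (\<lambda>x. Dks (k # ks) G \<phi> ((h0 # hs')[Suc i' := x]))"
        proof (rule linear_Dks_Cons_tail)
          show "((\<lambda>t. Dks ks G (\<psi>(k := \<psi> k + t *\<^sub>R h0)) (hs'[i' := x])) has_vector_derivative
              Dks (k # ks) G \<psi> (h0 # hs'[i' := x])) (at 0)" for \<psi> x
            using diff ks k len' unfolding jet_differentiable_def by simp
          show "linear (\<lambda>x. Dks ks G \<psi> (hs'[i' := x]))" for \<psi>
            using Cons.IH[OF ks] len' i hs Suc by simp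
        qed
        then show ?thesis using hs Suc by simp
      qed
    qed
  qed
  then show ?thesis unfolding jet_multilinear_def by blast
qed

definition const_jet :: "('e list \<Rightarrow> 'e) \<Rightarrow> 'e jet \<Rightarrow> 'e list \<Rightarrow> 'e" where
  "const_jet F = (\<lambda>\<phi> hs. F hs)"

lemma Dks_const_jet:
  "Dks ks (const_jet F :: 'e::real_normed_vector jet \<Rightarrow> _) \<phi> hs = (if ks = [] then F hs else 0)"
  by (induction ks arbitrary: \<phi> hs) (simp_all add: const_jet_def Dks_Cons)

lemma jet_regular_const_jet:
  assumes "multilin m F"
  shows "jet_regular d m (const_jet F :: 'e::real_normed_vector jet \<Rightarrow> _)"
  unfolding jet_regular_def jet_differentiable_def jet_multilinear_def
proof (intro conjI allI impI)
  show "\<exists>S. finite S \<and> depends_on S (const_jet F :: 'e jet \<Rightarrow> _)"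
    by (rule exI[of _ "{}"]) (simp add: depends_on_def const_jet_def)
next
  fix ks hs \<phi> k h
  show "((\<lambda>t. Dks ks (const_jet F :: 'e jet \<Rightarrow> _) (\<phi>(k := \<phi> k + t *\<^sub>R h)) hs) has_vector_derivative
      Dks (k # ks) (const_jet F) \<phi> (h # hs)) (at 0)"
    by (simp only: Dks_const_jet) simp
next
  fix ks :: "mi list" and hs :: "'e list" and \<phi> i
  assume "length hs = length ks + m" "i < length hs"
  then show "linear (\<lambda>x. Dks ks (const_jet F :: 'e jet \<Rightarrow> _) \<phi> (hs[i := x]))"
  proof (cases "ks = []")
    case True
    then show ?thesis
      using assms \<open>length hs = length ks + m\<close> \<open>i < length hs\<close> unfolding multilin_def
      by (simp add: Dks_const_jet const_jet_def)
  qed (simp add: Dks_const_jet linear_zero)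
qed

lemma Dnonzero_ar_const_jet:
  "Dnonzero_ar m ks (const_jet F :: 'e::real_normed_vector jet \<Rightarrow> _) \<Longrightarrow> ks = []"
  unfolding Dnonzero_ar_def by (auto simp: Dks_const_jet split: if_splits)

definition jet_component :: "mi \<Rightarrow> 'e jet \<Rightarrow> 'e" where
  "jet_component l = (\<lambda>\<phi>. \<phi> l)"

lemma Dks_Cons_jet_component:
  "Dks (k # ks) (lift (jet_component l) :: 'e::real_normed_vector jet \<Rightarrow> _) \<phi> hs =
     (if ks = [] \<and> k = l then hd hs else 0)"
proof (induction ks arbitrary: k \<phi> hs)
  case Nil
  have "((\<lambda>t::real. \<phi> l + t *\<^sub>R hd hs) has_vector_derivative hd hs) (at 0)"
    by (auto intro!: derivative_eq_intros)
  then show ?case by (simp add: Dks_Cons lift_def jet_component_def vector_derivative_at)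
next
  case (Cons k' ks)
  show ?case by (simp add: Dks_Cons[of k] Cons.IH)
qed

lemma jet_regular_jet_component:
  "jet_regular d 0 (lift (jet_component l) :: 'e::real_normed_vector jet \<Rightarrow> _)"
  unfolding jet_regular_def jet_differentiable_def jet_multilinear_def
proof (intro conjI allI impI)
  show "\<exists>S. finite S \<and> depends_on S (lift (jet_component l) :: 'e jet \<Rightarrow> _)"
    by (rule exI[of _ "{l}"]) (simp add: depends_on_def lift_def jet_component_def)
next
  fix ks :: "mi list" and hs :: "'e list" and \<phi> k h
  show "((\<lambda>t. Dks ks (lift (jet_component l) :: 'e jet \<Rightarrow> _) (\<phi>(k := \<phi> k + t *\<^sub>R h)) hs)
      has_vector_derivative Dks (k # ks) (lift (jet_component l)) \<phi> (h # hs)) (at 0)"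
  proof (cases ks)
    case Nil
    then show ?thesis
      by (simp only: Dks_Cons_jet_component Dks.simps(1))
        (auto simp: lift_def jet_component_def intro!: derivative_eq_intros)
  next
    case (Cons k' ks')
    then show ?thesis by (simp add: Dks_Cons_jet_component)
  qed
next
  fix ks :: "mi list" and hs :: "'e list" and \<phi> i
  assume len: "length hs = length ks + 0" and i: "i < length hs"
  then obtain k' ks' where ks: "ks = k' # ks'" by (cases ks) auto
  show "linear (\<lambda>x. Dks ks (lift (jet_component l) :: 'e jet \<Rightarrow> _) \<phi> (hs[i := x]))"
  proof (cases "ks' = [] \<and> k' = l")
    case True
    then obtain y where "hs = [y]" "i = 0" using ks len i by (auto simp: length_Suc_conv)
    then show ?thesis using True ks by (simp add: Dks_Cons_jet_component linear_ident)
  next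
    case False
    then have "(\<lambda>x. Dks ks (lift (jet_component l) :: 'e jet \<Rightarrow> _) \<phi> (hs[i := x])) = (\<lambda>x. 0)"
      using ks by (auto simp: Dks_Cons_jet_component)
    then show ?thesis by (simp add: linear_zero)
  qed
qed

lemma Dnonzero_ar_jet_component:
  "Dnonzero_ar 0 ks (lift (jet_component l) :: 'e::real_normed_vector jet \<Rightarrow> _) \<Longrightarrow> ks = [] \<or> ks = [l]"
  unfolding Dnonzero_ar_def by (cases ks) (auto simp: Dks_Cons_jet_component split: if_splits)

definition jet_sum :: "'i set \<Rightarrow> ('i \<Rightarrow> 'e jet \<Rightarrow> 'e list \<Rightarrow> 'e) \<Rightarrow> 'e jet \<Rightarrow> 'e list \<Rightarrow> 'e::real_normed_vector" where
  "jet_sum I Gs = (\<lambda>\<phi> hs. \<Sum>i\<in>I. Gs i \<phi> hs)"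

lemma Dks_jet_sum:
  fixes Gs :: "'i \<Rightarrow> 'e::real_normed_vector jet \<Rightarrow> 'e list \<Rightarrow> 'e"
  assumes "\<And>i. i \<in> I \<Longrightarrow> jet_differentiable d m (Gs i)" "set ks \<subseteq> mindex d" "length hs = length ks + m"
  shows "Dks ks (jet_sum I Gs) \<phi> hs = (\<Sum>i\<in>I. Dks ks (Gs i) \<phi> hs)"
  using assms(2,3)
proof (induction ks arbitrary: \<phi> hs)
  case Nil
  then show ?case by (simp add: jet_sum_def)
next
  case (Cons k ks)
  then obtain h hs' where hs: "hs = h # hs'" by (cases hs) auto
  have k: "k \<in> mindex d" and ks: "set ks \<subseteq> mindex d" and len: "length hs' = length ks + m"
    using Cons.prems hs by auto
  have deriv: "((\<lambda>t. \<Sum>i\<in>I. Dks ks (Gs i) (\<phi>(k := \<phi> k + t *\<^sub>R h)) hs') has_vector_derivative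
        (\<Sum>i\<in>I. Dks (k # ks) (Gs i) \<phi> (h # hs'))) (at 0)"
    using assms(1) k ks len unfolding jet_differentiable_def by (intro has_vector_derivative_sum) blast
  have eq: "(\<lambda>t. Dks ks (jet_sum I Gs) (\<phi>(k := \<phi> k + t *\<^sub>R h)) hs') =
      (\<lambda>t. \<Sum>i\<in>I. Dks ks (Gs i) (\<phi>(k := \<phi> k + t *\<^sub>R h)) hs')"
    by (rule ext) (rule Cons.IH[OF ks len])
  have "Dks (k # ks) (jet_sum I Gs) \<phi> hs =
      vector_derivative (\<lambda>t. Dks ks (jet_sum I Gs) (\<phi>(k := \<phi> k + t *\<^sub>R h)) hs') (at 0)"
    by (simp add: Dks_Cons hs)
  also have "\<dots> = (\<Sum>i\<in>I. Dks (k # ks) (Gs i) \<phi> (h # hs'))"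
    unfolding eq using deriv by (rule vector_derivative_at)
  finally show ?case using hs by simp
qed

lemma jet_regular_jet_sum:
  fixes Gs :: "'i \<Rightarrow> 'e::real_normed_vector jet \<Rightarrow> 'e list \<Rightarrow> 'e"
  assumes "finite I" and reg: "\<And>i. i \<in> I \<Longrightarrow> jet_regular d m (Gs i)"
  shows "jet_regular d m (jet_sum I Gs)"
  unfolding jet_regular_def
proof (intro conjI)
  obtain S where S: "\<And>i. i \<in> I \<Longrightarrow> finite (S i) \<and> depends_on (S i) (Gs i)"
    using jet_regularD(1)[OF reg] by metis
  have "depends_on (\<Union>i\<in>I. S i) (jet_sum I Gs)"
    unfolding depends_on_def jet_sum_def
  proof (intro allI impI)
    fix \<phi> \<psi> :: "'e jet" assume agree: "\<forall>l\<in>\<Union>i\<in>I. S i. \<phi> l = \<psi> l"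
    then have "Gs i \<phi> = Gs i \<psi>" if "i \<in> I" for i
      using S that unfolding depends_on_def by blast
    then show "(\<lambda>hs. \<Sum>i\<in>I. Gs i \<phi> hs) = (\<lambda>hs. \<Sum>i\<in>I. Gs i \<psi> hs)" by simp
  qed
  then show "\<exists>S. finite S \<and> depends_on S (jet_sum I Gs)"
    using S assms(1) by blast
  have D: "\<And>i. i \<in> I \<Longrightarrow> jet_differentiable d m (Gs i)"
    and L: "\<And>i. i \<in> I \<Longrightarrow> jet_multilinear d m (Gs i)"
    using jet_regularD[OF reg] by auto
  show "jet_differentiable d m (jet_sum I Gs)"
    unfolding jet_differentiable_def
  proof (intro allI impI)
    fix ks :: "mi list" and hs :: "'e list" and \<phi> k h
    assume a: "set ks \<subseteq> mindex d" "k \<in> mindex d" "length hs = length ks + m"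
    have "((\<lambda>t. \<Sum>i\<in>I. Dks ks (Gs i) (\<phi>(k := \<phi> k + t *\<^sub>R h)) hs) has_vector_derivative
        (\<Sum>i\<in>I. Dks (k # ks) (Gs i) \<phi> (h # hs))) (at 0)"
      using D a unfolding jet_differentiable_def by (intro has_vector_derivative_sum) blast
    then show "((\<lambda>t. Dks ks (jet_sum I Gs) (\<phi>(k := \<phi> k + t *\<^sub>R h)) hs) has_vector_derivative
        Dks (k # ks) (jet_sum I Gs) \<phi> (h # hs)) (at 0)"
      using a by (simp add: Dks_jet_sum[OF D])
  qed
  show "jet_multilinear d m (jet_sum I Gs)"
    unfolding jet_multilinear_def
  proof (intro allI impI)
    fix ks :: "mi list" and hs :: "'e list" and \<phi> i
    assume a: "set ks \<subseteq> mindex d" "length hs = length ks + m" "i < length hs"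
    have "linear (\<lambda>x. \<Sum>j\<in>I. Dks ks (Gs j) \<phi> (hs[i := x]))"
      using L a unfolding jet_multilinear_def by (intro linear_compose_sum) auto
    then show "linear (\<lambda>x. Dks ks (jet_sum I Gs) \<phi> (hs[i := x]))"
      using a by (simp add: Dks_jet_sum[OF D])
  qed
qed

lemma Dnonzero_ar_jet_sum:
  fixes Gs :: "'i \<Rightarrow> 'e::real_normed_vector jet \<Rightarrow> 'e list \<Rightarrow> 'e"
  assumes "\<And>i. i \<in> I \<Longrightarrow> jet_differentiable d m (Gs i)" "set ks \<subseteq> mindex d"
    and "Dnonzero_ar m ks (jet_sum I Gs)"
  shows "\<exists>i\<in>I. Dnonzero_ar m ks (Gs i)"
proof -
  obtain \<phi> hs where len: "length hs = length ks + m" and nz: "Dks ks (jet_sum I Gs) \<phi> hs \<noteq> 0"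
    using assms(3) unfolding Dnonzero_ar_def by blast
  moreover have "Dks ks (jet_sum I Gs) \<phi> hs = (\<Sum>i\<in>I. Dks ks (Gs i) \<phi> hs)"
    by (rule Dks_jet_sum[OF _ assms(2) len]) (rule assms(1))
  ultimately have "(\<Sum>i\<in>I. Dks ks (Gs i) \<phi> hs) \<noteq> 0" by simp
  then obtain i where "i \<in> I" "Dks ks (Gs i) \<phi> hs \<noteq> 0"
    using sum.not_neutral_contains_not_neutral by blast
  then show ?thesis using len unfolding Dnonzero_ar_def by blast
qed

lemma jet_regular_Dks:
  fixes G :: "'e::real_normed_vector jet \<Rightarrow> 'e list \<Rightarrow> 'e"
  assumes "jet_regular d m G" "set kk \<subseteq> mindex d"
  shows "jet_regular d (m + length kk) (Dks kk G)"
  unfolding jet_regular_def jet_differentiable_def jet_multilinear_def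
proof (intro conjI allI impI)
  show "\<exists>S. finite S \<and> depends_on S (Dks kk G)"
    using jet_regularD(1)[OF assms(1)] depends_on_Dks by blast
next
  fix ks :: "mi list" and hs :: "'e list" and \<phi> k h
  assume a: "set ks \<subseteq> mindex d" "k \<in> mindex d" "length hs = length ks + (m + length kk)"
  then have "((\<lambda>t. Dks (ks @ kk) G (\<phi>(k := \<phi> k + t *\<^sub>R h)) hs) has_vector_derivative
      Dks (k # ks @ kk) G \<phi> (h # hs)) (at 0)"
    using jet_regularD(2)[OF assms(1)] assms(2) unfolding jet_differentiable_def by simp
  then show "((\<lambda>t. Dks ks (Dks kk G) (\<phi>(k := \<phi> k + t *\<^sub>R h)) hs) has_vector_derivative
      Dks (k # ks) (Dks kk G) \<phi> (h # hs)) (at 0)"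
    by (simp add: Dks_append[symmetric])
next
  fix ks :: "mi list" and hs :: "'e list" and \<phi> i
  assume a: "set ks \<subseteq> mindex d" "length hs = length ks + (m + length kk)" "i < length hs"
  then have "linear (\<lambda>x. Dks (ks @ kk) G \<phi> (hs[i := x]))"
    using jet_regularD(3)[OF assms(1)] assms(2) unfolding jet_multilinear_def by simp
  then show "linear (\<lambda>x. Dks ks (Dks kk G) \<phi> (hs[i := x]))"
    by (simp add: Dks_append[symmetric])
qed

lemma Dks_cong:
  fixes G G' :: "'e::real_normed_vector jet \<Rightarrow> 'e list \<Rightarrow> 'e"
  assumes "\<And>\<phi> xs. length xs = m \<Longrightarrow> G \<phi> xs = G' \<phi> xs" "length hs = length ks + m"
  shows "Dks ks G \<phi> hs = Dks ks G' \<phi> hs"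
  using assms(2)
proof (induction ks arbitrary: \<phi> hs)
  case Nil
  then show ?case using assms(1) by simp
next
  case (Cons k ks)
  then obtain h hs' where hs: "hs = h # hs'" and len: "length hs' = length ks + m" by (cases hs) auto
  have "(\<lambda>t. Dks ks G (\<phi>(k := \<phi> k + t *\<^sub>R h)) hs') = (\<lambda>t. Dks ks G' (\<phi>(k := \<phi> k + t *\<^sub>R h)) hs')"
    by (rule ext) (rule Cons.IH[OF len])
  then show ?case using hs by (simp add: Dks_Cons)
qed

lemma jet_regular_cong:
  fixes G G' :: "'e::real_normed_vector jet \<Rightarrow> 'e list \<Rightarrow> 'e"
  assumes reg: "jet_regular d m G" and eq: "\<And>\<phi> xs. length xs = m \<Longrightarrow> G \<phi> xs = G' \<phi> xs"
    and "finite S" "depends_on S G'"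
  shows "jet_regular d m G'"
  unfolding jet_regular_def jet_differentiable_def jet_multilinear_def
proof (intro conjI allI impI)
  show "\<exists>S. finite S \<and> depends_on S G'" using assms(3,4) by blast
next
  fix ks :: "mi list" and hs :: "'e list" and \<phi> k h
  assume a: "set ks \<subseteq> mindex d" "k \<in> mindex d" "length hs = length ks + m"
  have len: "length (h # hs) = length (k # ks) + m" using a(3) by simp
  have e1: "Dks ks G' \<psi> hs = Dks ks G \<psi> hs" for \<psi>
    by (rule Dks_cong[OF eq a(3), symmetric])
  have e2: "Dks (k # ks) G' \<phi> (h # hs) = Dks (k # ks) G \<phi> (h # hs)"
    by (rule Dks_cong[OF eq len, symmetric])
  show "((\<lambda>t. Dks ks G' (\<phi>(k := \<phi> k + t *\<^sub>R h)) hs) has_vector_derivative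
      Dks (k # ks) G' \<phi> (h # hs)) (at 0)"
    unfolding e1 e2 using jet_regularD(2)[OF reg] a unfolding jet_differentiable_def by simp
next
  fix ks :: "mi list" and hs :: "'e list" and \<phi> i
  assume a: "set ks \<subseteq> mindex d" "length hs = length ks + m" "i < length hs"
  have len: "length (hs[i := x]) = length ks + m" for x using a(2) by simp
  have e: "Dks ks G' \<phi> (hs[i := x]) = Dks ks G \<phi> (hs[i := x])" for x
    by (rule Dks_cong[OF eq len, symmetric])
  show "linear (\<lambda>x. Dks ks G' \<phi> (hs[i := x]))"
    unfolding e using jet_regularD(3)[OF reg] a unfolding jet_multilinear_def by simp
qed

lemma Dnonzero_ar_cong:
  fixes G G' :: "'e::real_normed_vector jet \<Rightarrow> 'e list \<Rightarrow> 'e"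
  assumes "Dnonzero_ar m ks G" and eq: "\<And>\<phi> xs. length xs = m \<Longrightarrow> G \<phi> xs = G' \<phi> xs"
  shows "Dnonzero_ar m ks G'"
proof -
  obtain \<phi> hs where len: "length hs = length ks + m" and "Dks ks G \<phi> hs \<noteq> 0"
    using assms(1) unfolding Dnonzero_ar_def by blast
  moreover have "Dks ks G \<phi> hs = Dks ks G' \<phi> hs" by (rule Dks_cong[OF eq len])
  ultimately show ?thesis unfolding Dnonzero_ar_def by auto
qed

section \<open>The Leibniz rule\<close>

lemma has_vector_derivative_linear_apply:
  fixes L :: "real \<Rightarrow> 'e::euclidean_space \<Rightarrow> 'f::real_normed_vector"
  assumes dL: "\<And>x. ((\<lambda>t. L t x) has_vector_derivative L' x) (at 0)"
    and lin: "\<And>t. linear (L t)" and lin': "linear L'"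
    and dX: "(X has_vector_derivative X') (at 0)"
  shows "((\<lambda>t. L t (X t)) has_vector_derivative (L' (X 0) + L 0 X')) (at 0)"
proof -
  have basis_expansion: "M y = (\<Sum>b\<in>Basis. (y \<bullet> b) *\<^sub>R M b)" if "linear M" for M :: "'e \<Rightarrow> 'f" and y
  proof -
    have "M y = M (\<Sum>b\<in>Basis. (y \<bullet> b) *\<^sub>R b)" by (simp add: euclidean_representation)
    also have "\<dots> = (\<Sum>b\<in>Basis. (y \<bullet> b) *\<^sub>R M b)" using that by (simp add: linear_sum linear_scale)
    finally show ?thesis .
  qed
  have "((\<lambda>t. X t \<bullet> b) has_real_derivative X' \<bullet> b) (at 0)" for b
    using bounded_linear.has_vector_derivative[OF bounded_linear_inner_left dX, of b]
    by (simp add: has_real_derivative_iff_has_vector_derivative)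
  then have "((\<lambda>t. \<Sum>b\<in>Basis. (X t \<bullet> b) *\<^sub>R L t b) has_vector_derivative
      (\<Sum>b\<in>Basis. (X 0 \<bullet> b) *\<^sub>R L' b + (X' \<bullet> b) *\<^sub>R L 0 b)) (at 0)"
    by (intro has_vector_derivative_sum has_vector_derivative_scaleR dL)
  moreover have "(\<Sum>b\<in>Basis. (X 0 \<bullet> b) *\<^sub>R L' b + (X' \<bullet> b) *\<^sub>R L 0 b) = L' (X 0) + L 0 X'"
    by (simp add: sum.distrib basis_expansion[OF lin, where y = X'] basis_expansion[OF lin', where y = "X 0"])
  ultimately show ?thesis using basis_expansion[OF lin, where y = "X _"] by simp
qed

definition plug :: "('e jet \<Rightarrow> 'e list \<Rightarrow> 'e) \<Rightarrow> ('e jet \<Rightarrow> 'e) \<Rightarrow> 'e jet \<Rightarrow> 'e list \<Rightarrow> 'e" where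
  "plug N H = (\<lambda>\<phi> hs. N \<phi> (H \<phi> # hs))"

text \<open>The term of the Leibniz expansion of \<open>D\<^sup>k\<^sup>s (plug N H)\<close> in which the derivatives
  at the positions in \<open>A\<close> fall on \<open>H\<close> and the others on \<open>N\<close>.\<close>

definition leibniz_term :: "('e::real_normed_vector jet \<Rightarrow> 'e list \<Rightarrow> 'e) \<Rightarrow> ('e jet \<Rightarrow> 'e) \<Rightarrow>
    mi list \<Rightarrow> 'e list \<Rightarrow> 'e list \<Rightarrow> 'e jet \<Rightarrow> nat set \<Rightarrow> 'e" where
  "leibniz_term N H ks vs rest \<phi> A =
     Dks (nths ks (-A)) N \<phi> (nths vs (-A) @ Dks (nths ks A) (lift H) \<phi> (nths vs A) # rest)"

lemma nths_Cons_Suc_image: "nths (x # xs) (Suc ` A) = nths xs A"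
  by (simp add: nths_Cons image_iff)

lemma nths_Cons_Compl_Suc_image: "nths (x # xs) (- (Suc ` A)) = x # nths xs (- A)"
proof -
  have "{j. Suc j \<in> - Suc ` A} = - A" by (auto simp: image_iff)
  then show ?thesis by (simp add: nths_Cons image_iff)
qed

lemma nths_Cons_insert_0_Suc_image: "nths (x # xs) (insert 0 (Suc ` A)) = x # nths xs A"
  by (simp add: nths_Cons image_iff)

lemma nths_Cons_Compl_insert_0_Suc_image: "nths (x # xs) (- insert 0 (Suc ` A)) = nths xs (- A)"
proof -
  have "{j. Suc j \<in> - insert 0 (Suc ` A)} = - A" by (auto simp: image_iff)
  then show ?thesis by (simp add: nths_Cons)
qed

lemma leibniz_term_Cons_Suc_image: "leibniz_term N H (k # ks) (h # vs) rest \<phi> (Suc ` A) =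
   Dks (k # nths ks (-A)) N \<phi> (h # nths vs (-A) @ Dks (nths ks A) (lift H) \<phi> (nths vs A) # rest)"
  unfolding leibniz_term_def nths_Cons_Suc_image nths_Cons_Compl_Suc_image by simp

lemma leibniz_term_Cons_insert_0_Suc_image: "leibniz_term N H (k # ks) (h # vs) rest \<phi> (insert 0 (Suc ` A)) =
   Dks (nths ks (-A)) N \<phi> (nths vs (-A) @ Dks (k # nths ks A) (lift H) \<phi> (h # nths vs A) # rest)"
  unfolding leibniz_term_def nths_Cons_insert_0_Suc_image nths_Cons_Compl_insert_0_Suc_image by simp

lemma sum_Pow_lessThan_Suc:
  "(\<Sum>A'\<in>Pow {..<Suc r}. g A') = (\<Sum>A\<in>Pow {..<r}. g (Suc ` A) + g (insert 0 (Suc ` A)))"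
proof -
  let ?S = "Suc ` {..<r}"
  have z: "0 \<notin> ?S" by auto
  have "Pow {..<Suc r} = Pow ?S \<union> insert 0 ` Pow ?S"
    by (simp add: lessThan_Suc_eq_insert_0 Pow_insert)
  moreover have "Pow ?S \<inter> insert 0 ` Pow ?S = {}" using z by auto
  moreover have "inj_on (insert 0) (Pow ?S)" using z unfolding inj_on_def by (auto simp: insert_ident)
  ultimately have "(\<Sum>A'\<in>Pow {..<Suc r}. g A') = (\<Sum>A'\<in>Pow ?S. g A') + (\<Sum>A'\<in>Pow ?S. g (insert 0 A'))"
    by (simp add: sum.union_disjoint sum.reindex)
  moreover have "Pow ?S = image Suc ` Pow {..<r}" by (rule image_Pow_surj[symmetric]) simp
  moreover have "inj_on (image Suc) (Pow {..<r})" by (simp add: inj_on_image)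
  ultimately show ?thesis by (simp add: sum.reindex sum.distrib)
qed

lemma has_vector_derivative_leibniz_term:
  fixes N :: "'e::euclidean_space jet \<Rightarrow> 'e list \<Rightarrow> 'e" and H :: "'e jet \<Rightarrow> 'e"
  assumes N: "jet_regular d (Suc m) N" and H: "jet_regular d 0 (lift H)"
    and ks: "set ks \<subseteq> mindex d" and k: "k \<in> mindex d"
    and lv: "length vs = length ks" and lr: "length rest = m"
  shows "((\<lambda>t. leibniz_term N H ks vs rest (\<phi>(k := \<phi> k + t *\<^sub>R h)) A) has_vector_derivative
     leibniz_term N H (k # ks) (h # vs) rest \<phi> (Suc ` A) +
     leibniz_term N H (k # ks) (h # vs) rest \<phi> (insert 0 (Suc ` A))) (at 0)"
proof -
  let ?kc = "nths ks (-A)" and ?ka = "nths ks A" and ?vc = "nths vs (-A)" and ?va = "nths vs A"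
  have skc: "set ?kc \<subseteq> mindex d" and ska: "set ?ka \<subseteq> mindex d"
    using ks set_nths_subset by fastforce+
  have lvc: "length ?vc = length ?kc" and lva: "length ?va = length ?ka"
    using lv by (simp_all add: length_nths)
  define L where "L = (\<lambda>t x. Dks ?kc N (\<phi>(k := \<phi> k + t *\<^sub>R h)) (?vc @ x # rest))"
  define L' where "L' = (\<lambda>x. Dks (k # ?kc) N \<phi> (h # ?vc @ x # rest))"
  define X where "X = (\<lambda>t. Dks ?ka (lift H) (\<phi>(k := \<phi> k + t *\<^sub>R h)) ?va)"
  define X' where "X' = Dks (k # ?ka) (lift H) \<phi> (h # ?va)"
  have len: "length (?vc @ x # rest) = length ?kc + Suc m" for x
    using lvc lr by simp
  have "((\<lambda>t. L t x) has_vector_derivative L' x) (at 0)" for x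
    using jet_regularD(2)[OF N] skc k len unfolding jet_differentiable_def L_def L'_def by blast
  moreover have "linear (L t)" for t
  proof -
    have "linear (\<lambda>x. Dks ?kc N (\<phi>(k := \<phi> k + t *\<^sub>R h)) ((?vc @ 0 # rest)[length ?vc := x]))"
      using jet_regularD(3)[OF N, unfolded jet_multilinear_def, rule_format,
          of ?kc "?vc @ 0 # rest" "length ?vc" "\<phi>(k := \<phi> k + t *\<^sub>R h)"] skc len[of 0] by simp
    then show ?thesis unfolding L_def by simp
  qed
  moreover have "linear L'"
  proof -
    have "linear (\<lambda>x. Dks (k # ?kc) N \<phi> ((h # ?vc @ 0 # rest)[Suc (length ?vc) := x]))"
      using jet_regularD(3)[OF N, unfolded jet_multilinear_def, rule_format,
          of "k # ?kc" "h # ?vc @ 0 # rest" "Suc (length ?vc)" \<phi>] skc k len[of 0] by simp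
    then show ?thesis unfolding L'_def by simp
  qed
  moreover have "(X has_vector_derivative X') (at 0)"
    using jet_regularD(2)[OF H] ska k lva unfolding jet_differentiable_def X_def X'_def by simp
  ultimately have "((\<lambda>t. L t (X t)) has_vector_derivative (L' (X 0) + L 0 X')) (at 0)"
    by (rule has_vector_derivative_linear_apply)
  moreover have "(\<lambda>t. L t (X t)) = (\<lambda>t. leibniz_term N H ks vs rest (\<phi>(k := \<phi> k + t *\<^sub>R h)) A)"
    unfolding L_def X_def leibniz_term_def by simp
  moreover have "L' (X 0) = leibniz_term N H (k # ks) (h # vs) rest \<phi> (Suc ` A)"
    unfolding leibniz_term_Cons_Suc_image L'_def X_def by simp
  moreover have "L 0 X' = leibniz_term N H (k # ks) (h # vs) rest \<phi> (insert 0 (Suc ` A))"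
    unfolding leibniz_term_Cons_insert_0_Suc_image L_def X'_def by simp
  ultimately show ?thesis by simp
qed

lemma Dks_plug:
  fixes N :: "'e::euclidean_space jet \<Rightarrow> 'e list \<Rightarrow> 'e" and H :: "'e jet \<Rightarrow> 'e"
  assumes N: "jet_regular d (Suc m) N" and H: "jet_regular d 0 (lift H)"
    and ks: "set ks \<subseteq> mindex d" and lv: "length vs = length ks" and lr: "length rest = m"
  shows "Dks ks (plug N H) \<phi> (vs @ rest) = (\<Sum>A\<in>Pow {..<length ks}. leibniz_term N H ks vs rest \<phi> A)"
  using ks lv
proof (induction ks arbitrary: vs \<phi>)
  case Nil
  then show ?case by (simp add: leibniz_term_def plug_def lift_def)
next
  case (Cons k ks)
  then obtain h vs' where vs: "vs = h # vs'" and lv': "length vs' = length ks" by (cases vs) auto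
  have k: "k \<in> mindex d" and ks': "set ks \<subseteq> mindex d" using Cons.prems by auto
  have eq: "(\<lambda>t. Dks ks (plug N H) (\<phi>(k := \<phi> k + t *\<^sub>R h)) (vs' @ rest)) =
     (\<lambda>t. \<Sum>A\<in>Pow {..<length ks}. leibniz_term N H ks vs' rest (\<phi>(k := \<phi> k + t *\<^sub>R h)) A)"
    by (rule ext) (rule Cons.IH[OF ks' lv'])
  have "Dks (k # ks) (plug N H) \<phi> (vs @ rest) =
     vector_derivative (\<lambda>t. Dks ks (plug N H) (\<phi>(k := \<phi> k + t *\<^sub>R h)) (vs' @ rest)) (at 0)"
    by (simp add: Dks_Cons vs)
  also have "\<dots> = (\<Sum>A\<in>Pow {..<length ks}. leibniz_term N H (k # ks) (h # vs') rest \<phi> (Suc ` A) +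
      leibniz_term N H (k # ks) (h # vs') rest \<phi> (insert 0 (Suc ` A)))"
    unfolding eq
    by (intro vector_derivative_at has_vector_derivative_sum has_vector_derivative_leibniz_term[OF N H ks' k lv' lr])
  also have "\<dots> = (\<Sum>A\<in>Pow {..<length (k # ks)}. leibniz_term N H (k # ks) vs rest \<phi> A)"
    unfolding vs by (simp add: sum_Pow_lessThan_Suc)
  finally show ?case .
qed

lemma Dks_Cons_plug:
  fixes N :: "'e::euclidean_space jet \<Rightarrow> 'e list \<Rightarrow> 'e" and H :: "'e jet \<Rightarrow> 'e"
  assumes N: "jet_regular d (Suc m) N" and H: "jet_regular d 0 (lift H)"
    and k: "k \<in> mindex d" and ks: "set ks \<subseteq> mindex d" and lv: "length vs = length ks" and lr: "length rest = m"
  shows "Dks (k # ks) (plug N H) \<phi> (h # vs @ rest) =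
    (\<Sum>A\<in>Pow {..<length ks}. leibniz_term N H (k # ks) (h # vs) rest \<phi> (Suc ` A) +
      leibniz_term N H (k # ks) (h # vs) rest \<phi> (insert 0 (Suc ` A)))"
  using Dks_plug[OF N H _ _ lr, of "k # ks" "h # vs" \<phi>] k ks lv by (simp add: sum_Pow_lessThan_Suc)

lemma jet_differentiable_plug:
  fixes N :: "'e::euclidean_space jet \<Rightarrow> 'e list \<Rightarrow> 'e" and H :: "'e jet \<Rightarrow> 'e"
  assumes N: "jet_regular d (Suc m) N" and H: "jet_regular d 0 (lift H)"
  shows "jet_differentiable d m (plug N H)"
  unfolding jet_differentiable_def
proof (intro allI impI)
  fix ks :: "mi list" and hs :: "'e list" and \<phi> k h
  assume ks: "set ks \<subseteq> mindex d" and k: "k \<in> mindex d" and len: "length hs = length ks + m"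
  define vs where "vs = take (length ks) hs"
  define rest where "rest = drop (length ks) hs"
  have hs: "hs = vs @ rest" and lv: "length vs = length ks" and lr: "length rest = m"
    using len unfolding vs_def rest_def by auto
  have "((\<lambda>t. \<Sum>A\<in>Pow {..<length ks}. leibniz_term N H ks vs rest (\<phi>(k := \<phi> k + t *\<^sub>R h)) A)
      has_vector_derivative Dks (k # ks) (plug N H) \<phi> (h # hs)) (at 0)"
    unfolding hs Dks_Cons_plug[OF N H k ks lv lr]
    by (intro has_vector_derivative_sum has_vector_derivative_leibniz_term[OF N H ks k lv lr])
  then show "((\<lambda>t. Dks ks (plug N H) (\<phi>(k := \<phi> k + t *\<^sub>R h)) hs) has_vector_derivative
      Dks (k # ks) (plug N H) \<phi> (h # hs)) (at 0)"
    unfolding hs Dks_plug[OF N H ks lv lr] .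
qed

lemma linear_Dks_Cons_plug:
  fixes N :: "'e::euclidean_space jet \<Rightarrow> 'e list \<Rightarrow> 'e" and H :: "'e jet \<Rightarrow> 'e"
  assumes N: "jet_regular d (Suc m) N" and H: "jet_regular d 0 (lift H)"
    and k: "k \<in> mindex d" and ks: "set ks \<subseteq> mindex d" and len: "length hs = length ks + m"
  shows "linear (\<lambda>h. Dks (k # ks) (plug N H) \<phi> (h # hs))"
proof -
  define vs where "vs = take (length ks) hs"
  define rest where "rest = drop (length ks) hs"
  have hs: "hs = vs @ rest" and lv: "length vs = length ks" and lr: "length rest = m"
    using len unfolding vs_def rest_def by auto
  have NL: "jet_multilinear d (Suc m) N" and HL: "jet_multilinear d 0 (lift H)"
    using jet_regularD(3) N H by auto
  have lin: "linear (\<lambda>h. leibniz_term N H (k # ks) (h # vs) rest \<phi> (Suc ` A) +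
      leibniz_term N H (k # ks) (h # vs) rest \<phi> (insert 0 (Suc ` A)))" for A
  proof -
    let ?kc = "nths ks (-A)" and ?ka = "nths ks A" and ?vc = "nths vs (-A)" and ?va = "nths vs A"
    have skc: "set ?kc \<subseteq> mindex d" and ska: "set ?ka \<subseteq> mindex d"
      using ks set_nths_subset by fastforce+
    have lvc: "length ?vc = length ?kc" and lva: "length ?va = length ?ka"
      using lv by (simp_all add: length_nths)
    have "linear (\<lambda>h. Dks (k # ?kc) N \<phi> ((h # ?vc @ Dks ?ka (lift H) \<phi> ?va # rest)[0 := h]))"
      using NL[unfolded jet_multilinear_def, rule_format,
          of "k # ?kc" "0 # ?vc @ Dks ?ka (lift H) \<phi> ?va # rest" 0 \<phi>] skc k lvc lr by simp
    moreover have "linear (\<lambda>y. Dks ?kc N \<phi> ((?vc @ 0 # rest)[length ?vc := y]))"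
      using NL[unfolded jet_multilinear_def, rule_format, of ?kc "?vc @ 0 # rest" "length ?vc" \<phi>]
        skc lvc lr by simp
    moreover have "linear (\<lambda>h. Dks (k # ?ka) (lift H) \<phi> ((0 # ?va)[0 := h]))"
      using HL[unfolded jet_multilinear_def, rule_format, of "k # ?ka" "0 # ?va" 0 \<phi>] ska k lva by simp
    ultimately show ?thesis
      unfolding leibniz_term_Cons_Suc_image leibniz_term_Cons_insert_0_Suc_image
      using linear_compose[of "\<lambda>h. Dks (k # ?ka) (lift H) \<phi> (h # ?va)" "\<lambda>y. Dks ?kc N \<phi> (?vc @ y # rest)"]
      by (intro linear_compose_add) (simp_all add: o_def)
  qed
  show ?thesis
    unfolding hs Dks_Cons_plug[OF N H k ks lv lr] by (rule linear_compose_sum) (use lin in blast)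
qed

lemma jet_regular_plug:
  fixes N :: "'e::euclidean_space jet \<Rightarrow> 'e list \<Rightarrow> 'e" and H :: "'e jet \<Rightarrow> 'e"
  assumes N: "jet_regular d (Suc m) N" and H: "jet_regular d 0 (lift H)"
  shows "jet_regular d m (plug N H)"
  unfolding jet_regular_def
proof (intro conjI)
  obtain S1 where S1: "finite S1" "depends_on S1 N" using jet_regularD(1)[OF N] by blast
  obtain S2 where S2: "finite S2" "depends_on S2 (lift H)" using jet_regularD(1)[OF H] by blast
  have "depends_on (S1 \<union> S2) (plug N H)"
    unfolding depends_on_def
  proof (intro allI impI)
    fix \<phi> \<psi> :: "'e jet" assume "\<forall>l\<in>S1 \<union> S2. \<phi> l = \<psi> l"
    then have "N \<phi> = N \<psi>" "lift H \<phi> = lift H \<psi>"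
      using S1(2) S2(2) unfolding depends_on_def by auto
    moreover from this(2) have "H \<phi> = H \<psi>" unfolding lift_def by meson
    ultimately show "plug N H \<phi> = plug N H \<psi>" unfolding plug_def by simp
  qed
  then show "\<exists>S. finite S \<and> depends_on S (plug N H)" using S1(1) S2(1) by blast
  show diff: "jet_differentiable d m (plug N H)" by (rule jet_differentiable_plug[OF N H])
  show "jet_multilinear d m (plug N H)"
  proof (rule jet_multilinear_if_first[OF diff])
    fix \<phi> and hs :: "'e list" and i
    assume "length hs = m" "i < m"
    then show "linear (\<lambda>x. plug N H \<phi> (hs[i := x]))"
      using jet_regularD(3)[OF N, unfolded jet_multilinear_def, rule_format, of "[]" "H \<phi> # hs" "Suc i" \<phi>]
      by (simp add: plug_def)
  qed (rule linear_Dks_Cons_plug[OF N H])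
qed

lemma Dnonzero_ar_plug:
  fixes N :: "'e::euclidean_space jet \<Rightarrow> 'e list \<Rightarrow> 'e" and H :: "'e jet \<Rightarrow> 'e"
  assumes N: "jet_regular d (Suc m) N" and H: "jet_regular d 0 (lift H)" and ks: "set ks \<subseteq> mindex d"
    and nz: "Dnonzero_ar m ks (plug N H)"
  shows "\<exists>A. Dnonzero_ar (Suc m) (nths ks (-A)) N \<and> Dnonzero_ar 0 (nths ks A) (lift H)"
proof -
  obtain \<phi> hs where len: "length hs = length ks + m" and nz': "Dks ks (plug N H) \<phi> hs \<noteq> 0"
    using nz unfolding Dnonzero_ar_def by blast
  define vs where "vs = take (length ks) hs"
  define rest where "rest = drop (length ks) hs"
  have hs: "hs = vs @ rest" and lv: "length vs = length ks" and lr: "length rest = m"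
    using len unfolding vs_def rest_def by auto
  have "(\<Sum>A\<in>Pow {..<length ks}. leibniz_term N H ks vs rest \<phi> A) \<noteq> 0"
    using nz' Dks_plug[OF N H ks lv lr] hs by simp
  then obtain A where "leibniz_term N H ks vs rest \<phi> A \<noteq> 0"
    using sum.not_neutral_contains_not_neutral by blast
  then have t: "Dks (nths ks (-A)) N \<phi> (nths vs (-A) @ Dks (nths ks A) (lift H) \<phi> (nths vs A) # rest) \<noteq> 0"
    unfolding leibniz_term_def .
  let ?kc = "nths ks (-A)" and ?ka = "nths ks A" and ?vc = "nths vs (-A)" and ?va = "nths vs A"
  have skc: "set ?kc \<subseteq> mindex d" using ks set_nths_subset by fastforce
  have lvc: "length ?vc = length ?kc" and lva: "length ?va = length ?ka"
    using lv by (simp_all add: length_nths)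
  have "Dnonzero_ar (Suc m) ?kc N"
    using t lvc lr unfolding Dnonzero_ar_def
    by (intro exI[of _ \<phi>] exI[of _ "?vc @ Dks ?ka (lift H) \<phi> ?va # rest"]) simp
  moreover have "Dks ?ka (lift H) \<phi> ?va \<noteq> 0"
  proof
    assume z: "Dks ?ka (lift H) \<phi> ?va = 0"
    have "linear (\<lambda>y. Dks ?kc N \<phi> ((?vc @ 0 # rest)[length ?vc := y]))"
      using jet_regularD(3)[OF N, unfolded jet_multilinear_def, rule_format,
          of ?kc "?vc @ 0 # rest" "length ?vc" \<phi>] skc lvc lr by simp
    then have "Dks ?kc N \<phi> (?vc @ 0 # rest) = 0" using linear_0 by fastforce
    then show False using t z by simp
  qed
  then have "Dnonzero_ar 0 ?ka (lift H)" using lva unfolding Dnonzero_ar_def by auto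
  ultimately show ?thesis by blast
qed

fun plug_list :: "('e jet \<Rightarrow> 'e list \<Rightarrow> 'e) \<Rightarrow> ('e jet \<Rightarrow> 'e) list \<Rightarrow> 'e jet \<Rightarrow> 'e list \<Rightarrow> 'e" where
  "plug_list N [] = N"
| "plug_list N (H # Hs) = plug_list (plug N H) Hs"

lemma plug_list_apply: "plug_list N Hs \<phi> hs = N \<phi> (map (\<lambda>H. H \<phi>) Hs @ hs)"
  by (induction Hs arbitrary: N) (auto simp: plug_def)

lemma jet_regular_plug_list:
  fixes N :: "'e::euclidean_space jet \<Rightarrow> 'e list \<Rightarrow> 'e"
  assumes "jet_regular d (m + length Hs) N" "\<forall>H\<in>set Hs. jet_regular d 0 (lift H)"
  shows "jet_regular d m (plug_list N Hs)"
  using assms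
proof (induction Hs arbitrary: N)
  case Nil
  then show ?case by simp
next
  case (Cons H Hs)
  then have "jet_regular d (m + length Hs) (plug N H)" by (intro jet_regular_plug) auto
  then show ?case using Cons by simp
qed

lemma sum_list_map_nths_split:
  fixes w :: "'a \<Rightarrow> 'b::comm_monoid_add"
  shows "sum_list (map w xs) = sum_list (map w (nths xs A)) + sum_list (map w (nths xs (-A)))"
proof (induction xs arbitrary: A)
  case Nil
  then show ?case by simp
next
  case (Cons x xs)
  have "{j. Suc j \<notin> A} = - {j. Suc j \<in> A}" by auto
  then show ?case using Cons.IH[of "{j. Suc j \<in> A}"] by (simp add: nths_Cons ac_simps)
qed

lemma Dnonzero_ar_plug_list_weight:
  fixes N :: "'e::euclidean_space jet \<Rightarrow> 'e list \<Rightarrow> 'e" and w :: "mi \<Rightarrow> real"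
  assumes "jet_regular d (m + length HBs) N"
    and "\<forall>(H, b)\<in>set HBs. jet_regular d 0 (lift H) \<and>
          (\<forall>ks. set ks \<subseteq> mindex d \<longrightarrow> Dnonzero_ar 0 ks (lift H) \<longrightarrow> sum_list (map w ks) \<le> b)"
    and "set ks \<subseteq> mindex d" "Dnonzero_ar m ks (plug_list N (map fst HBs))"
  shows "\<exists>ks0. set ks0 \<subseteq> set ks \<and> Dnonzero_ar (m + length HBs) ks0 N \<and>
     sum_list (map w ks) \<le> sum_list (map w ks0) + sum_list (map snd HBs)"
  using assms
proof (induction HBs arbitrary: N)
  case Nil
  then show ?case by auto
next
  case (Cons Hb HBs)
  obtain H b where Hb: "Hb = (H, b)" by (cases Hb)
  have N: "jet_regular d (Suc (m + length HBs)) N" using Cons.prems by simp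
  have H: "jet_regular d 0 (lift H)"
    and Hw: "\<And>ks. set ks \<subseteq> mindex d \<Longrightarrow> Dnonzero_ar 0 ks (lift H) \<Longrightarrow> sum_list (map w ks) \<le> b"
    using Cons.prems(2) Hb by auto
  have "Dnonzero_ar m ks (plug_list (plug N H) (map fst HBs))" using Cons.prems(4) Hb by simp
  then obtain ks1 where k1: "set ks1 \<subseteq> set ks" "Dnonzero_ar (m + length HBs) ks1 (plug N H)"
    "sum_list (map w ks) \<le> sum_list (map w ks1) + sum_list (map snd HBs)"
    using Cons.IH[OF jet_regular_plug[OF N H] _ Cons.prems(3)] Cons.prems(2) by auto
  have sk1: "set ks1 \<subseteq> mindex d" using k1(1) Cons.prems(3) by auto
  obtain A where A: "Dnonzero_ar (Suc (m + length HBs)) (nths ks1 (-A)) N" "Dnonzero_ar 0 (nths ks1 A) (lift H)"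
    using Dnonzero_ar_plug[OF N H sk1 k1(2)] by blast
  have "sum_list (map w (nths ks1 A)) \<le> b"
    using Hw[OF _ A(2)] sk1 set_nths_subset by fastforce
  then have "sum_list (map w ks) \<le> sum_list (map w (nths ks1 (-A))) + sum_list (map snd (Hb # HBs))"
    using k1(3) sum_list_map_nths_split[of w ks1 A] Hb by simp
  moreover have "set (nths ks1 (-A)) \<subseteq> set ks" using k1(1) set_nths_subset by fastforce
  ultimately show ?case using A(1) by (intro exI[of _ "nths ks1 (-A)"]) simp
qed

section \<open>The derivations \<open>\<partial>\<^sup>i\<close>\<close>

lemma pd_eq_jet_sum:
  fixes G :: "'e::euclidean_space jet \<Rightarrow> 'e list \<Rightarrow> 'e"
  assumes "finite S" "depends_on S G"
  shows "pd d i G = jet_sum (S \<inter> mindex d) (\<lambda>l. plug (Dks [l] G) (jet_component (add_unit i l)))"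
proof (intro ext)
  fix \<phi> hs
  let ?F = "\<lambda>l. Dks [l] G \<phi> (\<phi> (add_unit i l) # hs)"
  have "infsum ?F (mindex d) = infsum ?F (S \<inter> mindex d)"
    by (rule infsum_cong_neutral) (auto intro: Dks_Cons_eq_0_if_not_depends[OF assms(2)])
  then show "pd d i G \<phi> hs = jet_sum (S \<inter> mindex d) (\<lambda>l. plug (Dks [l] G) (jet_component (add_unit i l))) \<phi> hs"
    using assms(1) by (simp add: pd_def jet_sum_def plug_def jet_component_def)
qed

lemma jet_regular_plug_Dks_component:
  fixes G :: "'e::euclidean_space jet \<Rightarrow> 'e list \<Rightarrow> 'e"
  assumes "jet_regular d m G" "l \<in> mindex d"
  shows "jet_regular d m (plug (Dks [l] G) (jet_component l'))"
  using jet_regular_Dks[OF assms(1), of "[l]"] assms(2)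
  by (intro jet_regular_plug jet_regular_jet_component) simp

lemma jet_regular_pd:
  fixes G :: "'e::euclidean_space jet \<Rightarrow> 'e list \<Rightarrow> 'e"
  assumes "jet_regular d m G"
  shows "jet_regular d m (pd d i G)"
proof -
  obtain S where S: "finite S" "depends_on S G" using jet_regularD(1)[OF assms] by blast
  have "jet_regular d m (jet_sum (S \<inter> mindex d) (\<lambda>l. plug (Dks [l] G) (jet_component (add_unit i l))))"
    using S(1) by (intro jet_regular_jet_sum jet_regular_plug_Dks_component[OF assms]) auto
  then show ?thesis using pd_eq_jet_sum[OF S] by simp
qed

lemma jet_regular_pd_pow:
  fixes G :: "'e::euclidean_space jet \<Rightarrow> 'e list \<Rightarrow> 'e"
  shows "jet_regular d m G \<Longrightarrow> jet_regular d m ((pd d i ^^ n) G)"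
  by (induction n) (auto intro: jet_regular_pd)

lemma jet_regular_foldr_pd_pow:
  fixes G :: "'e::euclidean_space jet \<Rightarrow> 'e list \<Rightarrow> 'e"
  shows "jet_regular d m G \<Longrightarrow> jet_regular d m (foldr (\<lambda>i H. (pd d i ^^ (c i)) H) ixs G)"
  by (induction ixs) (auto intro: jet_regular_pd_pow)

text \<open>A nonvanishing derivative of \<open>\<partial>\<^sup>i G\<close> comes from one of \<open>G\<close> in which at most one
  direction \<open>l + e\<^sub>i\<close> has been replaced by \<open>l\<close>; hence the weight grows by at most \<open>c\<close>.\<close>

lemma Dnonzero_ar_pd_weight:
  fixes G :: "'e::euclidean_space jet \<Rightarrow> 'e list \<Rightarrow> 'e" and w :: "mi \<Rightarrow> real"
  assumes G: "jet_regular d m G" and ks: "set ks \<subseteq> mindex d" and nz: "Dnonzero_ar m ks (pd d i G)"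
    and w: "\<And>l. l \<in> mindex d \<Longrightarrow> 0 \<le> w l + c \<and> w (add_unit i l) \<le> w l + c"
  shows "\<exists>ks'. set ks' \<subseteq> mindex d \<and> Dnonzero_ar m ks' G \<and> sum_list (map w ks) \<le> sum_list (map w ks') + c"
proof -
  obtain S where S: "finite S" "depends_on S G" using jet_regularD(1)[OF G] by blast
  let ?T = "\<lambda>l. plug (Dks [l] G) (jet_component (add_unit i l))"
  have "Dnonzero_ar m ks (jet_sum (S \<inter> mindex d) ?T)"
    using nz pd_eq_jet_sum[OF S] by simp
  moreover have "\<And>l. l \<in> S \<inter> mindex d \<Longrightarrow> jet_differentiable d m (?T l)"
    by (rule jet_regularD(2)[OF jet_regular_plug_Dks_component[OF G]]) simp
  ultimately obtain l where "l \<in> S \<inter> mindex d" and nzl: "Dnonzero_ar m ks (?T l)"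
    using Dnonzero_ar_jet_sum[OF _ ks] by (metis (no_types, lifting))
  then have l: "l \<in> mindex d" by simp
  have DG: "jet_regular d (Suc m) (Dks [l] G)" using jet_regular_Dks[OF G, of "[l]"] l by simp
  obtain A where A: "Dnonzero_ar (Suc m) (nths ks (-A)) (Dks [l] G)"
      "Dnonzero_ar 0 (nths ks A) (lift (jet_component (add_unit i l)) :: 'e jet \<Rightarrow> _)"
    using Dnonzero_ar_plug[OF DG jet_regular_jet_component ks nzl] by blast
  have "Dnonzero_ar m (nths ks (-A) @ [l]) G"
    using A(1) Dnonzero_ar_Dks[of m "[l]" "nths ks (-A)" G] by simp
  moreover have "nths ks A = [] \<or> nths ks A = [add_unit i l]"
    by (rule Dnonzero_ar_jet_component[OF A(2)])
  then have "sum_list (map w (nths ks A)) \<le> w l + c" using w[OF l] by auto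
  then have "sum_list (map w ks) \<le> sum_list (map w (nths ks (-A) @ [l])) + c"
    using sum_list_map_nths_split[of w ks A] by simp
  moreover have "set (nths ks (-A) @ [l]) \<subseteq> mindex d" using ks l set_nths_subset by fastforce
  ultimately show ?thesis by blast
qed

lemma Dnonzero_ar_pd_pow_weight:
  fixes G :: "'e::euclidean_space jet \<Rightarrow> 'e list \<Rightarrow> 'e" and w :: "mi \<Rightarrow> real"
  assumes G: "jet_regular d m G"
    and w: "\<And>l. l \<in> mindex d \<Longrightarrow> 0 \<le> w l + c \<and> w (add_unit i l) \<le> w l + c"
  shows "set ks \<subseteq> mindex d \<Longrightarrow> Dnonzero_ar m ks ((pd d i ^^ n) G) \<Longrightarrow>
    \<exists>ks'. set ks' \<subseteq> mindex d \<and> Dnonzero_ar m ks' G \<and> sum_list (map w ks) \<le> sum_list (map w ks') + n * c"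
proof (induction n arbitrary: ks)
  case 0
  then show ?case by auto
next
  case (Suc n)
  have "Dnonzero_ar m ks (pd d i ((pd d i ^^ n) G))" using Suc.prems(2) by simp
  then obtain ks1 where ks1: "set ks1 \<subseteq> mindex d" "Dnonzero_ar m ks1 ((pd d i ^^ n) G)"
      "sum_list (map w ks) \<le> sum_list (map w ks1) + c"
    using Dnonzero_ar_pd_weight[where w = w and c = c and i = i,
        OF jet_regular_pd_pow[OF G, where i = i and n = n] Suc.prems(1) _ w] by blast
  then obtain ks' where "set ks' \<subseteq> mindex d" "Dnonzero_ar m ks' G"
      "sum_list (map w ks1) \<le> sum_list (map w ks') + n * c"
    using Suc.IH by blast
  then show ?case using ks1(3) by (intro exI[of _ ks']) (simp add: algebra_simps)
qed

lemma Dnonzero_ar_foldr_pd_pow_weight: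
  fixes G :: "'e::euclidean_space jet \<Rightarrow> 'e list \<Rightarrow> 'e" and w :: "mi \<Rightarrow> real"
  assumes G: "jet_regular d m G"
    and w: "\<And>i l. i \<in> set ixs \<Longrightarrow> l \<in> mindex d \<Longrightarrow> 0 \<le> w l + c i \<and> w (add_unit i l) \<le> w l + c i"
  shows "set ks \<subseteq> mindex d \<Longrightarrow> Dnonzero_ar m ks (foldr (\<lambda>i H. (pd d i ^^ (n i)) H) ixs G) \<Longrightarrow>
    \<exists>ks'. set ks' \<subseteq> mindex d \<and> Dnonzero_ar m ks' G \<and>
       sum_list (map w ks) \<le> sum_list (map w ks') + (\<Sum>i\<leftarrow>ixs. n i * c i)"
  using w
proof (induction ixs arbitrary: ks)
  case Nil
  then show ?case by auto
next
  case (Cons i ixs)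
  have wi: "\<And>l. l \<in> mindex d \<Longrightarrow> 0 \<le> w l + c i \<and> w (add_unit i l) \<le> w l + c i"
    using Cons.prems(3) by simp
  have "Dnonzero_ar m ks ((pd d i ^^ n i) (foldr (\<lambda>i H. (pd d i ^^ (n i)) H) ixs G))"
    using Cons.prems(2) by simp
  then obtain ks1 where ks1: "set ks1 \<subseteq> mindex d"
      "Dnonzero_ar m ks1 (foldr (\<lambda>i H. (pd d i ^^ (n i)) H) ixs G)"
      "sum_list (map w ks) \<le> sum_list (map w ks1) + n i * c i"
    using Dnonzero_ar_pd_pow_weight[where w = w and c = "c i" and i = i and n = "n i",
        OF jet_regular_foldr_pd_pow[OF G, where c = n and ixs = ixs] wi Cons.prems(1)] by blast
  then obtain ks' where "set ks' \<subseteq> mindex d" "Dnonzero_ar m ks' G"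
      "sum_list (map w ks1) \<le> sum_list (map w ks') + (\<Sum>i\<leftarrow>ixs. n i * c i)"
    using Cons.IH[OF ks1(1) ks1(2)] Cons.prems(3) by (metis list.set_intros(2))
  then show ?case using ks1(3) by (intro exI[of _ ks']) (simp add: algebra_simps)
qed

lemma directional_derivative_scaleR:
  fixes g :: "'e::real_normed_vector jet \<Rightarrow> 'f::real_normed_vector"
  assumes deriv: "\<And>h. ((\<lambda>t. g (\<phi>(k := \<phi> k + t *\<^sub>R h))) has_vector_derivative D h) (at 0)"
  shows "D (c *\<^sub>R x) = c *\<^sub>R D x"
proof -
  have "((\<lambda>t::real. c * t) has_vector_derivative c) (at 0)"
    using has_real_derivative_iff_has_vector_derivative by (auto intro!: derivative_eq_intros)
  moreover have "((\<lambda>s. g (\<phi>(k := \<phi> k + s *\<^sub>R x))) has_vector_derivative D x) (at (c * 0))"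
    using deriv[of x] by simp
  ultimately have "((\<lambda>s. g (\<phi>(k := \<phi> k + s *\<^sub>R x))) \<circ> (\<lambda>t. c * t) has_vector_derivative c *\<^sub>R D x) (at 0)"
    by (rule vector_diff_chain_at)
  moreover have "(\<lambda>s. g (\<phi>(k := \<phi> k + s *\<^sub>R x))) \<circ> (\<lambda>t. c * t) = (\<lambda>t. g (\<phi>(k := \<phi> k + t *\<^sub>R (c *\<^sub>R x))))"
    by (auto simp: o_def mult.commute)
  ultimately show ?thesis
    using deriv[of "c *\<^sub>R x"] vector_derivative_unique_at by metis
qed

text \<open>Additivity is where the continuity of the derivatives enters: it makes
  \<open>(a, b) \<mapsto> g (\<phi> + a x + b y)\<close> Frechet differentiable at \<open>0\<close>
  (\<open>has_derivative_partialsI\<close>), and the diagonal \<open>a = b\<close> yields \<open>D \<phi> (x + y)\<close>.\<close>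

lemma directional_derivative_add:
  fixes g :: "'e::real_normed_vector jet \<Rightarrow> 'f::real_normed_vector" and D :: "'e jet \<Rightarrow> 'e \<Rightarrow> 'f"
  assumes deriv: "\<And>\<psi> h. ((\<lambda>t. g (\<psi>(k := \<psi> k + t *\<^sub>R h))) has_vector_derivative D \<psi> h) (at 0)"
    and cont: "\<And>h. continuous_on UNIV (\<lambda>\<psi>. D \<psi> h)"
  shows "D \<phi> (x + y) = D \<phi> x + D \<phi> y"
proof -
  define \<Phi> where "\<Phi> = (\<lambda>a b. \<phi>(k := \<phi> k + a *\<^sub>R x + b *\<^sub>R y))"
  have dx: "((\<lambda>a. g (\<Phi> a 0)) has_derivative (\<lambda>s. s *\<^sub>R D \<phi> x)) (at 0)"
    using deriv[of \<phi> x] by (simp add: \<Phi>_def has_vector_derivative_def)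
  have dy: "((\<lambda>b. g (\<Phi> a b)) has_derivative blinfun_apply (blinfun_scaleR_left (D (\<Phi> a b) y))) (at b)" for a b
  proof -
    have "(\<Phi> a b)(k := \<Phi> a b k + s *\<^sub>R y) = \<Phi> a (s + b)" for s
      by (simp add: \<Phi>_def algebra_simps)
    then have "((\<lambda>s. g (\<Phi> a (s + b))) has_vector_derivative D (\<Phi> a b) y) (at (b - b))"
      using deriv[of "\<Phi> a b" y] by simp
    moreover have "((\<lambda>b'. b' - b) has_vector_derivative 1) (at b)"
      by (auto intro!: derivative_eq_intros)
    ultimately have "((\<lambda>s. g (\<Phi> a (s + b))) \<circ> (\<lambda>b'. b' - b) has_vector_derivative 1 *\<^sub>R D (\<Phi> a b) y) (at b)"
      by (intro vector_diff_chain_at)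
    then show ?thesis by (simp add: o_def has_vector_derivative_def)
  qed
  have "continuous_on UNIV (\<lambda>p::real \<times> real. \<Phi> (fst p) (snd p))"
  proof (rule continuous_on_coordinatewise_then_product)
    show "continuous_on UNIV (\<lambda>p::real \<times> real. \<Phi> (fst p) (snd p) l)" for l
      by (cases "l = k") (auto simp: \<Phi>_def intro!: continuous_intros)
  qed
  then have "continuous_on UNIV (\<lambda>p::real \<times> real. blinfun_scaleR_left (D (\<Phi> (fst p) (snd p)) y))"
    by (intro continuous_on_compose2[OF cont[of y], THEN bounded_linear.continuous_on[OF bounded_linear_blinfun_scaleR_left]]) auto
  then have cont_dy: "continuous (at (0, 0) within UNIV \<times> UNIV) (\<lambda>(a, b). blinfun_scaleR_left (D (\<Phi> a b) y))"
    by (simp add: case_prod_beta' continuous_on_eq_continuous_within)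
  have partials: "((\<lambda>(a, b). g (\<Phi> a b)) has_derivative (\<lambda>(ta, tb). ta *\<^sub>R D \<phi> x + tb *\<^sub>R D \<phi> y))
      (at (0, 0))"
    using has_derivative_partialsI[where f = "\<lambda>a b. g (\<Phi> a b)", OF dx dy cont_dy]
    by (simp add: \<Phi>_def)
  have diagonal: "((\<lambda>t::real. (t, t)) has_derivative (\<lambda>t. (t, t))) (at 0)"
    by (intro has_derivative_Pair has_derivative_ident)
  have "((\<lambda>t. g (\<Phi> t t)) has_derivative (\<lambda>t. t *\<^sub>R (D \<phi> x + D \<phi> y))) (at 0)"
    using has_derivative_compose[OF diagonal partials] by (simp add: scaleR_add_right)
  moreover have "(\<lambda>t. g (\<Phi> t t)) = (\<lambda>t. g (\<phi>(k := \<phi> k + t *\<^sub>R (x + y))))"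
    by (simp add: \<Phi>_def algebra_simps scaleR_add_right)
  ultimately show ?thesis
    using deriv[of \<phi> "x + y"] vector_derivative_unique_at unfolding has_vector_derivative_def by metis
qed

lemma linear_directional_derivative:
  fixes g :: "'e::real_normed_vector jet \<Rightarrow> 'f::real_normed_vector" and D :: "'e jet \<Rightarrow> 'e \<Rightarrow> 'f"
  assumes "\<And>\<psi> h. ((\<lambda>t. g (\<psi>(k := \<psi> k + t *\<^sub>R h))) has_vector_derivative D \<psi> h) (at 0)"
    and "\<And>h. continuous_on UNIV (\<lambda>\<psi>. D \<psi> h)"
  shows "linear (D \<phi>)"
  using directional_derivative_add[OF assms] directional_derivative_scaleR[OF assms(1)] by (rule linearI)

lemma jet_regular_smooth_jet:
  fixes g :: "'e::euclidean_space jet \<Rightarrow> 'e"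
  assumes smooth: "smooth_jet d g" and "finite S" "depends_on S (lift g)"
  shows "jet_regular d 0 (lift g)"
  unfolding jet_regular_def
proof (intro conjI)
  show "\<exists>S. finite S \<and> depends_on S (lift g)" using assms(2,3) by blast
  show diff: "jet_differentiable d 0 (lift g)"
    using smooth unfolding smooth_jet_def jet_differentiable_def by simp
  show "jet_multilinear d 0 (lift g)"
  proof (rule jet_multilinear_if_first[OF diff])
    fix k ks \<phi> and hs :: "'e list"
    assume k: "k \<in> mindex d" and ks: "set ks \<subseteq> mindex d"
    show "linear (\<lambda>h. Dks (k # ks) (lift g) \<phi> (h # hs))"
    proof (rule linear_directional_derivative[where g = "\<lambda>\<psi>. Dks ks (lift g) \<psi> hs" and k = k])
      show "((\<lambda>t. Dks ks (lift g) (\<psi>(k := \<psi> k + t *\<^sub>R h)) hs) has_vector_derivative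
          Dks (k # ks) (lift g) \<psi> (h # hs)) (at 0)" for \<psi> h
        using smooth k ks unfolding smooth_jet_def by blast
      show "continuous_on UNIV (\<lambda>\<psi>. Dks (k # ks) (lift g) \<psi> (h # hs))" for h
        using smooth k ks unfolding smooth_jet_def by (metis insert_subset list.simps(15))
    qed
  qed simp
qed

lemma finite_Jidx: "finite (Jidx d)"
proof (rule finite_subset)
  show "Jidx d \<subseteq> {xs. set xs \<subseteq> {0, 1} \<and> length xs = d}"
  proof
    fix k assume "k \<in> Jidx d"
    then have len: "length k = d" and deg: "sdeg k < 2" by (auto simp: Jidx_def mindex_def)
    have "set k \<subseteq> {0, 1}"
    proof (cases k)
      case (Cons x xs)
      then have "x = 0" "sum_list xs \<le> 1" using deg by (auto simp: sdeg_def)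
      moreover have "\<forall>y\<in>set xs. y \<le> sum_list xs" using member_le_sum_list by blast
      ultimately show ?thesis using Cons by force
    qed simp
    then show "k \<in> {xs. set xs \<subseteq> {0, 1} \<and> length xs = d}" using len by simp
  qed
  show "finite {xs. set xs \<subseteq> {0::nat, 1} \<and> length xs = d}" by (rule finite_lists_length_eq) simp
qed

lemma depends_on_lift_if_on_J: "on_J d g \<Longrightarrow> depends_on (Jidx d) (lift g)"
  unfolding on_J_def depends_on_def lift_def by auto

lemma jet_regular_if_on_J:
  fixes g :: "'e::euclidean_space jet \<Rightarrow> 'e"
  assumes "smooth_jet d g" "on_J d g"
  shows "jet_regular d 0 (lift g)"
  using jet_regular_smooth_jet[OF assms(1) finite_Jidx depends_on_lift_if_on_J[OF assms(2)]] .

section \<open>Weights of nonvanishing derivatives\<close>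

definition weight_bounded :: "nat \<Rightarrow> real \<Rightarrow> ('e::real_normed_vector jet \<Rightarrow> 'e) \<Rightarrow> real \<Rightarrow> bool" where
  "weight_bounded d a g W \<longleftrightarrow>
    (\<forall>ks. set ks \<subseteq> mindex d \<longrightarrow> Dnonzero ks (lift g) \<longrightarrow> a * length ks + sdeg_list ks \<le> W)"

lemma sum_list_map_weight: "(\<Sum>l\<leftarrow>ks. a + real (sdeg l)) = a * length ks + sdeg_list ks"
  by (induction ks) (auto simp: sdeg_list_def algebra_simps)

lemma weight_bounded_iff:
  "weight_bounded d a g W \<longleftrightarrow>
    (\<forall>ks. set ks \<subseteq> mindex d \<longrightarrow> Dnonzero_ar 0 ks (lift g) \<longrightarrow> (\<Sum>l\<leftarrow>ks. a + real (sdeg l)) \<le> W)"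
  by (simp add: weight_bounded_def Dnonzero_ar_0 sum_list_map_weight)

lemma weight_bounded_if_depends_on:
  fixes a :: real
  assumes "depends_on S (lift g)" "\<And>l. l \<in> S \<Longrightarrow> a + sdeg l \<le> 0"
  shows "weight_bounded d a g 0"
  unfolding weight_bounded_iff
proof (intro allI impI)
  fix ks assume "Dnonzero_ar 0 ks (lift g)"
  then have "set ks \<subseteq> S" by (rule Dnonzero_ar_subset_if_depends_on[OF assms(1)])
  then show "(\<Sum>l\<leftarrow>ks. a + real (sdeg l)) \<le> 0"
    using assms(2) by (induction ks) (auto intro: add_nonpos_nonpos)
qed

lemma sdeg_zero_mi: "sdeg (zero_mi d) = 0"
  by (cases d) (simp_all add: sdeg_def zero_mi_def)

lemma sdeg_unit_mi:
  assumes "1 \<le> i" "i < d"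
  shows "sdeg (unit_mi d i) = 1"
proof -
  obtain d' i' where d: "d = Suc d'" and i: "i = Suc i'" and "i' < d'"
    using assms by (cases d; cases i) auto
  moreover have "i' < n \<Longrightarrow> sum_list ((replicate n (0::nat))[i' := 1]) = 1" for n
    by (induction n arbitrary: i') (auto split: nat.splits)
  ultimately show ?thesis by (simp add: sdeg_def unit_mi_def)
qed

lemma sdeg_le_1_if_Jidx: "l \<in> Jidx d \<Longrightarrow> sdeg l \<le> 1"
  by (simp add: Jidx_def)

lemma jet_regular_plug_list_components:
  fixes F :: "'e::euclidean_space list \<Rightarrow> 'e"
  assumes "multilin (length ls) F"
  shows "jet_regular d 0 (plug_list (const_jet F) (map jet_component ls))"
  by (rule jet_regular_plug_list) (auto intro: jet_regular_const_jet[OF assms] jet_regular_jet_component)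

lemma Dnonzero_ar_plug_list_components_weight:
  fixes F :: "'e::euclidean_space list \<Rightarrow> 'e" and w :: "mi \<Rightarrow> real"
  assumes "multilin (length ls) F" "set ks \<subseteq> mindex d"
    and "Dnonzero_ar 0 ks (plug_list (const_jet F) (map jet_component ls))"
  shows "sum_list (map w ks) \<le> (\<Sum>l\<leftarrow>ls. max 0 (w l))"
proof -
  define HBs where "HBs = map (\<lambda>l. (jet_component l :: 'e jet \<Rightarrow> 'e, max 0 (w l))) ls"
  have "\<exists>ks0. set ks0 \<subseteq> set ks \<and> Dnonzero_ar (0 + length HBs) ks0 (const_jet F) \<and>
     sum_list (map w ks) \<le> sum_list (map w ks0) + sum_list (map snd HBs)"
  proof (rule Dnonzero_ar_plug_list_weight)
    show "jet_regular d (0 + length HBs) (const_jet F)"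
      using jet_regular_const_jet[OF assms(1)] by (simp add: HBs_def)
    have "sum_list (map w ks) \<le> max 0 (w l)"
      if "Dnonzero_ar 0 ks (lift (jet_component l) :: 'e jet \<Rightarrow> _)" for ks l
      using Dnonzero_ar_jet_component[OF that] by auto
    then show "\<forall>(H, b)\<in>set HBs. jet_regular d 0 (lift H) \<and>
        (\<forall>ks. set ks \<subseteq> mindex d \<longrightarrow> Dnonzero_ar 0 ks (lift H) \<longrightarrow> sum_list (map w ks) \<le> b)"
      unfolding HBs_def using jet_regular_jet_component by auto
    show "Dnonzero_ar 0 ks (plug_list (const_jet F) (map fst HBs))"
      using assms(3) by (simp add: HBs_def o_def)
  qed (fact assms(2))
  then obtain ks0 where "Dnonzero_ar (length HBs) ks0 (const_jet F)"
      "sum_list (map w ks) \<le> sum_list (map w ks0) + sum_list (map snd HBs)"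
    by auto
  then show ?thesis using Dnonzero_ar_const_jet by (fastforce simp: HBs_def o_def)
qed

definition Fterm_jet :: "nat \<Rightarrow> nat \<Rightarrow> ('e list \<Rightarrow> 'e) \<Rightarrow> 'e jet \<Rightarrow> 'e list \<Rightarrow> 'e" where
  "Fterm_jet d p F = plug_list (const_jet F) (map jet_component (replicate p (zero_mi d)))"

definition Bterm_jet :: "nat \<Rightarrow> nat \<Rightarrow> (nat \<Rightarrow> 'e list \<Rightarrow> 'e) \<Rightarrow> nat \<Rightarrow> 'e jet \<Rightarrow> 'e list \<Rightarrow> 'e" where
  "Bterm_jet d q B i = plug_list (const_jet (B i)) (map jet_component (unit_mi d i # replicate q (zero_mi d)))"

lemma Fterm_jet_Nil: "Fterm_jet d p F \<phi> [] = Fterm d p F \<phi>"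
  by (simp add: Fterm_jet_def plug_list_apply Fterm_def jet_component_def map_replicate_const
      o_def const_jet_def)

lemma Bterm_jet_Nil: "jet_sum {1..<d} (Bterm_jet d q B) \<phi> [] = Bterm d q B (\<phi> :: 'e::real_normed_vector jet)"
  by (simp add: Bterm_jet_def jet_sum_def plug_list_apply Bterm_def jet_component_def
      map_replicate_const o_def const_jet_def plug_def)

lemma jet_regular_Fterm_jet:
  fixes F :: "'e::euclidean_space list \<Rightarrow> 'e"
  shows "multilin p F \<Longrightarrow> jet_regular d 0 (Fterm_jet d p F)"
  unfolding Fterm_jet_def by (intro jet_regular_plug_list_components) simp

lemma Dnonzero_ar_Fterm_jet_weight:
  fixes F :: "'e::euclidean_space list \<Rightarrow> 'e" and w :: "mi \<Rightarrow> real"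
  assumes "multilin p F" "set ks \<subseteq> mindex d" "Dnonzero_ar 0 ks (Fterm_jet d p F)"
  shows "sum_list (map w ks) \<le> p * max 0 (w (zero_mi d))"
  using Dnonzero_ar_plug_list_components_weight[of "replicate p (zero_mi d)" F ks d w] assms
  by (simp add: Fterm_jet_def sum_list_replicate)

lemma jet_regular_Bterm_jet:
  fixes B :: "nat \<Rightarrow> 'e::euclidean_space list \<Rightarrow> 'e"
  shows "multilin (q + 1) (B i) \<Longrightarrow> jet_regular d 0 (Bterm_jet d q B i)"
  unfolding Bterm_jet_def by (intro jet_regular_plug_list_components) simp

lemma Dnonzero_ar_Bterm_jet_weight:
  fixes B :: "nat \<Rightarrow> 'e::euclidean_space list \<Rightarrow> 'e" and w :: "mi \<Rightarrow> real"
  assumes "multilin (q + 1) (B i)" "set ks \<subseteq> mindex d" "Dnonzero_ar 0 ks (Bterm_jet d q B i)"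
  shows "sum_list (map w ks) \<le> max 0 (w (unit_mi d i)) + q * max 0 (w (zero_mi d))"
  using Dnonzero_ar_plug_list_components_weight[of "unit_mi d i # replicate q (zero_mi d)" "B i" ks d w] assms
  by (simp add: Bterm_jet_def sum_list_replicate)

lemma P_representation:
  fixes F :: "'e::euclidean_space list \<Rightarrow> 'e"
  assumes F: "multilin p F"
    and P: "P = Fterm d p F \<or> (odd p \<and> q = (p - 1) div 2 \<and> (\<forall>i. multilin (q + 1) (B i)) \<and>
          P = (\<lambda>\<phi>. Fterm d p F \<phi> + Bterm d q B \<phi>))"
  obtains G where "jet_regular d 0 G" "\<And>\<phi>. G \<phi> [] = P \<phi>"
    and "\<And>ks (w :: mi \<Rightarrow> real). set ks \<subseteq> mindex d \<Longrightarrow> Dnonzero_ar 0 ks G \<Longrightarrow>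
      sum_list (map w ks) \<le> p * max 0 (w (zero_mi d)) \<or>
      (odd p \<and> q = (p - 1) div 2 \<and>
       (\<exists>i\<in>{1..<d}. sum_list (map w ks) \<le> max 0 (w (unit_mi d i)) + q * max 0 (w (zero_mi d))))"
proof (cases "P = Fterm d p F")
  case True
  show ?thesis
  proof (rule that[OF jet_regular_Fterm_jet[OF F]])
    show "Fterm_jet d p F \<phi> [] = P \<phi>" for \<phi> by (simp add: True Fterm_jet_Nil)
    show "sum_list (map w ks) \<le> p * max 0 (w (zero_mi d)) \<or>
        (odd p \<and> q = (p - 1) div 2 \<and>
         (\<exists>i\<in>{1..<d}. sum_list (map w ks) \<le> max 0 (w (unit_mi d i)) + q * max 0 (w (zero_mi d))))"
      if "set ks \<subseteq> mindex d" "Dnonzero_ar 0 ks (Fterm_jet d p F)" for ks and w :: "mi \<Rightarrow> real"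
      using Dnonzero_ar_Fterm_jet_weight[OF F that] by (rule disjI1)
  qed
next
  case False
  then have B: "\<And>i. multilin (q + 1) (B i)" and PB: "P = (\<lambda>\<phi>. Fterm d p F \<phi> + Bterm d q B \<phi>)"
    and pq: "odd p" "q = (p - 1) div 2" using P by auto
  define FB where "FB = (\<lambda>b. if b then Fterm_jet d p F else jet_sum {1..<d} (Bterm_jet d q B))"
  have regB: "jet_regular d 0 (Bterm_jet d q B i)" for i
    by (rule jet_regular_Bterm_jet) (rule B)
  then have "jet_regular d 0 (jet_sum {1..<d} (Bterm_jet d q B))"
    by (intro jet_regular_jet_sum) simp_all
  then have regFB: "jet_regular d 0 (FB b)" for b
    using jet_regular_Fterm_jet[OF F] by (simp add: FB_def)
  show ?thesis
  proof (rule that)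
    show "jet_regular d 0 (jet_sum UNIV FB)" by (intro jet_regular_jet_sum regFB) simp
    show "jet_sum UNIV FB \<phi> [] = P \<phi>" for \<phi>
      using Fterm_jet_Nil[of d p F \<phi>] Bterm_jet_Nil[of d q B \<phi>]
      unfolding jet_sum_def[of "UNIV :: bool set"] by (simp add: FB_def UNIV_bool PB)
    fix ks and w :: "mi \<Rightarrow> real"
    assume ks: "set ks \<subseteq> mindex d" and "Dnonzero_ar 0 ks (jet_sum UNIV FB)"
    moreover have "\<And>b. b \<in> UNIV \<Longrightarrow> jet_differentiable d 0 (FB b)"
      using jet_regularD(2)[OF regFB] by blast
    ultimately obtain b where b: "Dnonzero_ar 0 ks (FB b)"
      using Dnonzero_ar_jet_sum[OF _ ks] by blast
    show "sum_list (map w ks) \<le> p * max 0 (w (zero_mi d)) \<or>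
        (odd p \<and> q = (p - 1) div 2 \<and>
         (\<exists>i\<in>{1..<d}. sum_list (map w ks) \<le> max 0 (w (unit_mi d i)) + q * max 0 (w (zero_mi d))))"
    proof (cases b)
      case True
      then show ?thesis using Dnonzero_ar_Fterm_jet_weight[OF F ks] b by (simp add: FB_def)
    next
      case False
      have "\<And>i. i \<in> {1..<d} \<Longrightarrow> jet_differentiable d 0 (Bterm_jet d q B i)"
        using jet_regularD(2)[OF regB] by blast
      moreover have "Dnonzero_ar 0 ks (jet_sum {1..<d} (Bterm_jet d q B))"
        using b False by (simp add: FB_def)
      ultimately obtain i where i: "i \<in> {1..<d}" and nz: "Dnonzero_ar 0 ks (Bterm_jet d q B i)"
        using Dnonzero_ar_jet_sum[OF _ ks] by blast
      have "sum_list (map w ks) \<le> max 0 (w (unit_mi d i)) + q * max 0 (w (zero_mi d))"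
        by (rule Dnonzero_ar_Bterm_jet_weight[where B = B and i = i, OF B ks nz])
      then show ?thesis using i pq by blast
    qed
  qed
qed

lemma depends_on_lift_P:
  fixes P :: "'e::real_vector jet \<Rightarrow> 'e"
  assumes "P = Fterm d p F \<or> (odd p \<and> q = (p - 1) div 2 \<and> (\<forall>i. multilin (q + 1) (B i)) \<and>
          P = (\<lambda>\<phi>. Fterm d p F \<phi> + Bterm d q B \<phi>))"
  shows "depends_on (insert (zero_mi d) (unit_mi d ` {1..<d})) (lift P)"
  unfolding depends_on_def lift_def
proof (intro allI impI)
  fix \<phi> \<psi> :: "'e jet" assume agree: "\<forall>l\<in>insert (zero_mi d) (unit_mi d ` {1..<d}). \<phi> l = \<psi> l"
  then have zero: "\<phi> (zero_mi d) = \<psi> (zero_mi d)"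
    and unit: "\<And>i. i \<in> {1..<d} \<Longrightarrow> \<phi> (unit_mi d i) = \<psi> (unit_mi d i)"
    by simp_all
  have "Fterm d p F \<phi> = Fterm d p F \<psi>" using zero by (simp add: Fterm_def)
  moreover have "Bterm d q B \<phi> = Bterm d q B \<psi>"
    unfolding Bterm_def using zero unit by (intro sum.cong) simp_all
  ultimately show "(\<lambda>hs. P \<phi>) = (\<lambda>hs. P \<psi>)" using assms by (elim disjE conjE) simp_all
qed

lemma jet_regular_lift_P:
  fixes F :: "'e::euclidean_space list \<Rightarrow> 'e"
  assumes "multilin p F"
    and P: "P = Fterm d p F \<or> (odd p \<and> q = (p - 1) div 2 \<and> (\<forall>i. multilin (q + 1) (B i)) \<and>
          P = (\<lambda>\<phi>. Fterm d p F \<phi> + Bterm d q B \<phi>))"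
  shows "jet_regular d 0 (lift P)"
proof -
  obtain G where G: "jet_regular d 0 G" "\<And>\<phi>. G \<phi> [] = P \<phi>"
    by (rule P_representation[OF assms]) (rule that)
  show ?thesis
  proof (rule jet_regular_cong[OF G(1) _ _ depends_on_lift_P[OF P]])
    show "G \<phi> xs = lift P \<phi> xs" if "length xs = 0" for \<phi> xs
      using that G(2) by (simp add: lift_def)
  qed simp
qed

lemma Dnonzero_lift_P_weight:
  fixes F :: "'e::euclidean_space list \<Rightarrow> 'e" and a :: real
  assumes "multilin p F"
    and "P = Fterm d p F \<or> (odd p \<and> q = (p - 1) div 2 \<and> (\<forall>i. multilin (q + 1) (B i)) \<and>
          P = (\<lambda>\<phi>. Fterm d p F \<phi> + Bterm d q B \<phi>))"
    and ks: "set ks \<subseteq> mindex d" and nz: "Dnonzero ks (lift P)"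
  shows "a * length ks + sdeg_list ks \<le> p * max 0 a \<or>
    (odd p \<and> q = (p - 1) div 2 \<and> a * length ks + sdeg_list ks \<le> max 0 (a + 1) + q * max 0 a)"
proof -
  obtain G where "jet_regular d 0 G" and G: "\<And>\<phi>. G \<phi> [] = P \<phi>"
    and weight: "\<And>ks (w :: mi \<Rightarrow> real). set ks \<subseteq> mindex d \<Longrightarrow> Dnonzero_ar 0 ks G \<Longrightarrow>
      sum_list (map w ks) \<le> p * max 0 (w (zero_mi d)) \<or>
      (odd p \<and> q = (p - 1) div 2 \<and>
       (\<exists>i\<in>{1..<d}. sum_list (map w ks) \<le> max 0 (w (unit_mi d i)) + q * max 0 (w (zero_mi d))))"
    by (rule P_representation[OF assms(1,2)]) (rule that)
  have "Dnonzero_ar 0 ks G"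
  proof (rule Dnonzero_ar_cong)
    show "Dnonzero_ar 0 ks (lift P)" using nz by (simp add: Dnonzero_ar_0)
    show "lift P \<phi> xs = G \<phi> xs" if "length xs = 0" for \<phi> xs
      using that G by (simp add: lift_def)
  qed
  from weight[OF ks this, of "\<lambda>l. a + real (sdeg l)"] show ?thesis
    unfolding sum_list_map_weight
    by (elim disjE conjE bexE) (simp_all add: sdeg_zero_mi sdeg_unit_mi)
qed

definition scale_weight :: "nat \<Rightarrow> real" where
  "scale_weight i = (if i = 0 then 2 else 1)"

lemma sdeg_add_unit:
  assumes "length l = d" "i < d"
  shows "real (sdeg (add_unit i l)) = real (sdeg l) + scale_weight i"
proof (cases l)
  case (Cons x xs)
  have "i' < length ys \<Longrightarrow> sum_list (ys[i' := Suc (ys ! i')]) = Suc (sum_list ys)" for ys :: "nat list" and i'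
    by (induction ys arbitrary: i') (auto split: nat.splits)
  then show ?thesis
    using Cons assms by (cases i) (simp_all add: add_unit_def sdeg_def scale_weight_def)
qed (use assms in simp)

lemma sdeg_eq_sum_scale_weight:
  assumes "length k = d"
  shows "real (sdeg k) = (\<Sum>i\<leftarrow>[0..<d]. real (k ! i) * scale_weight i)"
proof (cases k)
  case Nil
  then show ?thesis using assms by (simp add: sdeg_def)
next
  case (Cons x xs)
  then have "(\<Sum>i\<leftarrow>[0..<d]. real (k ! i) * scale_weight i) = (\<Sum>i<Suc (length xs). real (k ! i) * scale_weight i)"
    using assms by (simp add: sum_list_sum_nth atLeast0LessThan del: upt_Suc)
  also have "\<dots> = 2 * real x + (\<Sum>i<length xs. real (xs ! i))"
    by (subst sum.lessThan_Suc_shift) (simp add: Cons scale_weight_def)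
  also have "\<dots> = real (sdeg k)"
    by (simp add: Cons sdeg_def sum_list_sum_nth atLeast0LessThan)
  finally show ?thesis ..
qed

lemma jet_regular_pdk:
  fixes G :: "'e::euclidean_space jet \<Rightarrow> 'e list \<Rightarrow> 'e"
  shows "jet_regular d m G \<Longrightarrow> jet_regular d m (pdk d k G)"
  unfolding pdk_def by (rule jet_regular_foldr_pd_pow)

lemma Dnonzero_ar_pdk_weight:
  fixes G :: "'e::euclidean_space jet \<Rightarrow> 'e list \<Rightarrow> 'e"
  assumes G: "jet_regular d m G" and a: "a \<ge> -1" and k: "k \<in> mindex d"
    and ks: "set ks \<subseteq> mindex d" and nz: "Dnonzero_ar m ks (pdk d k G)"
  obtains ks' where "set ks' \<subseteq> mindex d" "Dnonzero_ar m ks' G"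
    "(\<Sum>l\<leftarrow>ks. a + real (sdeg l)) \<le> (\<Sum>l\<leftarrow>ks'. a + real (sdeg l)) + sdeg k"
proof -
  have w: "0 \<le> a + real (sdeg l) + scale_weight i \<and>
      a + real (sdeg (add_unit i l)) \<le> a + real (sdeg l) + scale_weight i"
    if "i \<in> set [0..<d]" "l \<in> mindex d" for i l
    using sdeg_add_unit[of l d i] that a by (simp add: mindex_def scale_weight_def)
  have sum: "(\<Sum>i\<leftarrow>[0..<d]. real (k ! i) * scale_weight i) = sdeg k"
    using sdeg_eq_sum_scale_weight[of k d] k by (simp add: mindex_def)
  obtain ks' where "set ks' \<subseteq> mindex d" "Dnonzero_ar m ks' G"
      "(\<Sum>l\<leftarrow>ks. a + real (sdeg l)) \<le> (\<Sum>l\<leftarrow>ks'. a + real (sdeg l)) +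
         (\<Sum>i\<leftarrow>[0..<d]. real (k ! i) * scale_weight i)"
    using Dnonzero_ar_foldr_pd_pow_weight[where w = "\<lambda>l. a + real (sdeg l)" and c = scale_weight
        and ixs = "[0..<d]" and n = "\<lambda>i. k ! i", OF G w ks nz[unfolded pdk_def]] by blast
  then show ?thesis using that sum by simp
qed

lemma tree_induct [case_names Node]:
  assumes "\<And>k j cs. (\<And>c. c \<in> set cs \<Longrightarrow> Q (snd c)) \<Longrightarrow> Q (Node k j cs)"
  shows "Q \<tau>"
proof (induction \<tau>)
  case (Node k j cs)
  show ?case
  proof (rule assms)
    fix c assume "c \<in> set cs"
    moreover have "snd c \<in> Basic_BNFs.snds c" by (cases c) simp
    ultimately show "Q (snd c)" using Node.IH by blast
  qed
qed

lemma Ups_Node_eq_plug_list: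
  "Ups d P f (Node k j cs) \<phi> =
    plug_list (pdk d k (Dks (map fst cs) (lift (Ups_base P f j)))) (map (\<lambda>c. Ups d P f (snd c)) cs) \<phi> []"
  by (simp add: plug_list_apply o_def)

lemma conforming_NodeD:
  assumes "conforming d n P f (Node k j cs)"
  shows "k \<in> mindex d" "j \<le> n" "set (map fst cs) \<subseteq> mindex d"
    "\<And>c. c \<in> set cs \<Longrightarrow> conforming d n P f (snd c)"
  using assms by auto

lemma jet_regular_Ups:
  fixes P :: "'e::euclidean_space jet \<Rightarrow> 'e"
  assumes P: "jet_regular d 0 (lift P)" and f: "\<And>j. j \<in> {1..n} \<Longrightarrow> jet_regular d 0 (lift (f j))"
  shows "conforming d n P f \<tau> \<Longrightarrow> jet_regular d 0 (lift (Ups d P f \<tau>))"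
proof (induction \<tau> rule: tree_induct)
  case (Node k j cs)
  note conf = conforming_NodeD[OF Node.prems]
  define N where "N = pdk d k (Dks (map fst cs) (lift (Ups_base P f j)))"
  have "jet_regular d 0 (lift (Ups_base P f j))"
    using P f conf(2) by (cases "j = 0") (auto simp: Ups_base_def)
  from jet_regular_Dks[OF this conf(3)] have "jet_regular d (length cs) N"
    unfolding N_def by (intro jet_regular_pdk) simp
  then have reg: "jet_regular d 0 (plug_list N (map (\<lambda>c. Ups d P f (snd c)) cs))"
    using Node.IH conf(4) by (intro jet_regular_plug_list) auto
  then obtain S where S: "finite S" "depends_on S (plug_list N (map (\<lambda>c. Ups d P f (snd c)) cs))"
    using jet_regularD(1) by blast
  have eq: "Ups d P f (Node k j cs) \<phi> = plug_list N (map (\<lambda>c. Ups d P f (snd c)) cs) \<phi> []" for \<phi>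
    unfolding N_def by (rule Ups_Node_eq_plug_list)
  have dep: "depends_on S (lift (Ups d P f (Node k j cs)))"
    using S(2) unfolding depends_on_def lift_def eq by metis
  show ?case
  proof (rule jet_regular_cong[OF reg _ S(1) dep])
    show "plug_list N (map (\<lambda>c. Ups d P f (snd c)) cs) \<phi> xs = lift (Ups d P f (Node k j cs)) \<phi> xs"
      if "length xs = 0" for \<phi> xs
      using that by (simp add: lift_def eq del: Ups.simps)
  qed
qed

lemma weight_bounded_vertex:
  fixes g :: "'e::euclidean_space jet \<Rightarrow> 'e"
  assumes a: "a \<ge> -1" and k: "k \<in> mindex d" and kk: "set kk \<subseteq> mindex d"
    and g: "jet_regular d 0 (lift g)" "weight_bounded d a g W"
    and HBs: "\<forall>(H, b)\<in>set HBs. jet_regular d 0 (lift H) \<and> weight_bounded d a H b"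
    and len: "length HBs = length kk"
    and u: "\<And>\<phi>. u \<phi> = plug_list (pdk d k (Dks kk (lift g))) (map fst HBs) \<phi> []"
  shows "weight_bounded d a u (W + sdeg k + sum_list (map snd HBs) - (\<Sum>l\<leftarrow>kk. a + real (sdeg l)))"
proof -
  define w where "w = (\<lambda>l. a + real (sdeg l))"
  have regN0: "jet_regular d (length kk) (Dks kk (lift g))"
    using jet_regular_Dks[OF g(1) kk] by simp
  then have regN: "jet_regular d (0 + length HBs) (pdk d k (Dks kk (lift g)))"
    using jet_regular_pdk len by simp
  have HBs': "\<forall>(H, b)\<in>set HBs. jet_regular d 0 (lift H) \<and>
      (\<forall>ks. set ks \<subseteq> mindex d \<longrightarrow> Dnonzero_ar 0 ks (lift H) \<longrightarrow> sum_list (map w ks) \<le> b)"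
    using HBs unfolding w_def weight_bounded_iff by auto
  show ?thesis
    unfolding weight_bounded_iff
  proof (intro allI impI)
    fix ks assume ks: "set ks \<subseteq> mindex d" and nz: "Dnonzero_ar 0 ks (lift u)"
    have "Dnonzero_ar 0 ks (plug_list (pdk d k (Dks kk (lift g))) (map fst HBs))"
    proof (rule Dnonzero_ar_cong[OF nz])
      show "lift u \<phi> xs = plug_list (pdk d k (Dks kk (lift g))) (map fst HBs) \<phi> xs"
        if "length xs = 0" for \<phi> xs
        using that by (simp add: lift_def u)
    qed
    then obtain ks0 where ks0: "set ks0 \<subseteq> set ks" "Dnonzero_ar (0 + length HBs) ks0 (pdk d k (Dks kk (lift g)))"
        "sum_list (map w ks) \<le> sum_list (map w ks0) + sum_list (map snd HBs)"
      using Dnonzero_ar_plug_list_weight[OF regN HBs' ks] by blast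
    have "set ks0 \<subseteq> mindex d" "Dnonzero_ar (length kk) ks0 (pdk d k (Dks kk (lift g)))"
      using ks0(1,2) ks len by auto
    then obtain ks' where ks': "set ks' \<subseteq> mindex d" "Dnonzero_ar (length kk) ks' (Dks kk (lift g))"
        "sum_list (map w ks0) \<le> sum_list (map w ks') + sdeg k"
      using Dnonzero_ar_pdk_weight[OF regN0 a k] unfolding w_def by blast
    have "Dnonzero_ar (0 + length kk) ks' (Dks kk (lift g))" using ks'(2) by simp
    then have "Dnonzero (ks' @ kk) (lift g)"
      by (simp add: Dnonzero_ar_Dks flip: Dnonzero_ar_0)
    moreover have "set (ks' @ kk) \<subseteq> mindex d" using ks'(1) kk by simp
    ultimately have "a * length (ks' @ kk) + sdeg_list (ks' @ kk) \<le> W"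
      using g(2) unfolding weight_bounded_def by blast
    then have "sum_list (map w (ks' @ kk)) \<le> W"
      unfolding w_def sum_list_map_weight .
    then show "(\<Sum>l\<leftarrow>ks. a + real (sdeg l)) \<le>
        W + sdeg k + sum_list (map snd HBs) - (\<Sum>l\<leftarrow>kk. a + real (sdeg l))"
      using ks0(3) ks'(3) by (simp add: w_def)
  qed
qed

text \<open>The bounds \<open>W0\<close> for \<open>P\<close> and \<open>Wf\<close> for the \<open>f\<^sub>j\<close> propagated through the tree
  by \<open>weight_bounded_vertex\<close>.\<close>

fun weight_bound :: "real \<Rightarrow> real \<Rightarrow> real \<Rightarrow> tree \<Rightarrow> real" where
  "weight_bound a W0 Wf (Node k j cs) = (if j = 0 then W0 else Wf) + real (sdeg k)
     + (\<Sum>c\<leftarrow>cs. weight_bound a W0 Wf (snd c) - (a + real (sdeg (fst c))))"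

lemma weight_bounded_Ups:
  fixes P :: "'e::euclidean_space jet \<Rightarrow> 'e"
  assumes a: "a \<ge> -1"
    and P: "jet_regular d 0 (lift P)" "weight_bounded d a P W0"
    and f: "\<And>j. j \<in> {1..n} \<Longrightarrow> jet_regular d 0 (lift (f j))"
      "\<And>j. j \<in> {1..n} \<Longrightarrow> weight_bounded d a (f j) Wf"
  shows "conforming d n P f \<tau> \<Longrightarrow> weight_bounded d a (Ups d P f \<tau>) (weight_bound a W0 Wf \<tau>)"
proof (induction \<tau> rule: tree_induct)
  case (Node k j cs)
  note conf = conforming_NodeD[OF Node.prems]
  define HBs where "HBs = map (\<lambda>c. (Ups d P f (snd c), weight_bound a W0 Wf (snd c))) cs"
  have j: "j \<noteq> 0 \<Longrightarrow> j \<in> {1..n}" using conf(2) by simp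
  have "jet_regular d 0 (lift (Ups_base P f j))"
    using P(1) f(1)[OF j] by (cases "j = 0") (simp_all add: Ups_base_def)
  moreover have "weight_bounded d a (Ups_base P f j) (if j = 0 then W0 else Wf)"
    using P(2) f(2)[OF j] by (cases "j = 0") (simp_all add: Ups_base_def)
  moreover have "\<forall>(H, b)\<in>set HBs. jet_regular d 0 (lift H) \<and> weight_bounded d a H b"
    using Node.IH conf(4) jet_regular_Ups[OF P(1) f(1)] by (auto simp: HBs_def)
  ultimately have "weight_bounded d a (Ups d P f (Node k j cs))
      ((if j = 0 then W0 else Wf) + sdeg k + sum_list (map snd HBs) - (\<Sum>l\<leftarrow>map fst cs. a + real (sdeg l)))"
    by (rule weight_bounded_vertex[OF a conf(1,3)])
      (simp_all add: HBs_def o_def Ups_Node_eq_plug_list del: Ups.simps)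
  moreover have "(if j = 0 then W0 else Wf) + sdeg k + sum_list (map snd HBs)
      - (\<Sum>l\<leftarrow>map fst cs. a + real (sdeg l)) = weight_bound a W0 Wf (Node k j cs)"
    by (simp add: HBs_def o_def sum_list_subtractf)
  ultimately show ?case by (simp only:)
qed

fun noise_count :: "tree \<Rightarrow> nat" where
  "noise_count (Node k j cs) = (if j \<ge> 1 then 1 else 0) + (\<Sum>c\<leftarrow>cs. noise_count (snd c))"

lemma sum_list_map_le_sum_list_map:
  fixes g h :: "'a \<Rightarrow> real"
  assumes "\<And>x. x \<in> set xs \<Longrightarrow> g x \<le> h x"
  shows "(\<Sum>x\<leftarrow>xs. g x) \<le> (\<Sum>x\<leftarrow>xs. h x)"
  using assms by (induction xs) (auto intro: add_mono)

lemma weight_bound_eq_hom: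
  fixes a \<beta> Wf :: real
  shows "weight_bound a (a + 2) Wf \<tau> = hom \<beta> \<tau> + (a + 2) - noise_count \<tau> * (\<beta> + a + 2 - Wf)"
proof (induction \<tau> rule: tree_induct)
  case (Node k j cs)
  have "(\<Sum>c\<leftarrow>cs. weight_bound a (a + 2) Wf (snd c) - (a + real (sdeg (fst c)))) =
      (\<Sum>c\<leftarrow>cs. (hom \<beta> (snd c) + 2 - real (sdeg (fst c))) - real (noise_count (snd c)) * (\<beta> + a + 2 - Wf))"
    using Node by (intro arg_cong[where f = sum_list] map_cong) (simp_all add: algebra_simps)
  also have "\<dots> = (\<Sum>c\<leftarrow>cs. hom \<beta> (snd c) + 2 - real (sdeg (fst c)))
      - real (\<Sum>c\<leftarrow>cs. noise_count (snd c)) * (\<beta> + a + 2 - Wf)"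
    by (simp add: sum_list_subtractf sum_list_mult_const o_def flip: sum_list_of_nat)
  finally show ?case by (simp add: algebra_simps)
qed

lemma weight_bound_le_hom:
  fixes a c \<beta> W0 Wf :: real
  assumes "c \<le> a + 2" "W0 \<le> c" "noise_count \<tau> > 0 \<longrightarrow> Wf \<le> c + \<beta>"
  shows "weight_bound a W0 Wf \<tau> \<le> hom \<beta> \<tau> + c"
  using assms(3)
proof (induction \<tau> rule: tree_induct)
  case (Node k j cs)
  have "noise_count (snd x) \<le> noise_count (Node k j cs)" if "x \<in> set cs" for x
    using that member_le_sum_list[of "noise_count (snd x)" "map (\<lambda>c. noise_count (snd c)) cs"] by simp
  then have "weight_bound a W0 Wf (snd x) \<le> hom \<beta> (snd x) + c" if "x \<in> set cs" for x
    using Node that by fastforce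
  then have "(\<Sum>x\<leftarrow>cs. weight_bound a W0 Wf (snd x) - (a + real (sdeg (fst x)))) \<le>
      (\<Sum>x\<leftarrow>cs. hom \<beta> (snd x) + 2 - real (sdeg (fst x)))"
    using assms(1) by (intro sum_list_map_le_sum_list_map) fastforce
  then show ?case
    using Node.prems assms(2) by (cases "j \<ge> 1") auto
qed

lemma weight_bounded_P:
  fixes F :: "'e::euclidean_space list \<Rightarrow> 'e"
  assumes "multilin p F"
    and "P = Fterm d p F \<or> (odd p \<and> q = (p - 1) div 2 \<and> (\<forall>i. multilin (q + 1) (B i)) \<and>
          P = (\<lambda>\<phi>. Fterm d p F \<phi> + Bterm d q B \<phi>))"
  shows "weight_bounded d (-1) P 0" and "weight_bounded d 0 P 1"
    and "p \<ge> 2 \<Longrightarrow> weight_bounded d (2 / (real p - 1)) P (2 / (real p - 1) + 2)"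
proof -
  show "weight_bounded d (-1) P 0"
    using Dnonzero_lift_P_weight[where a = "-1", OF assms] unfolding weight_bounded_def by fastforce
  show "weight_bounded d 0 P 1"
    using Dnonzero_lift_P_weight[where a = 0, OF assms] unfolding weight_bounded_def by fastforce
  assume "p \<ge> 2"
  define \<alpha> where "\<alpha> = 2 / (real p - 1)"
  have "\<alpha> > 0" and "p * \<alpha> = \<alpha> + 2" using \<open>p \<ge> 2\<close> by (auto simp: \<alpha>_def field_simps)
  moreover have "q * \<alpha> = 1" if "odd p" "q = (p - 1) div 2"
  proof -
    have "real p - 1 = 2 * real q" using that by (auto elim!: oddE)
    then show ?thesis using \<open>p \<ge> 2\<close> by (simp add: \<alpha>_def field_simps)
  qed
  ultimately show "weight_bounded d (2 / (real p - 1)) P (2 / (real p - 1) + 2)"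
    using Dnonzero_lift_P_weight[where a = \<alpha>, OF assms] unfolding weight_bounded_def \<alpha>_def[symmetric]
    by fastforce
qed

lemma weight_bounded_if_on_J:
  assumes "on_J d g"
  shows "weight_bounded d (-1) g 0"
proof (rule weight_bounded_if_depends_on[OF depends_on_lift_if_on_J[OF assms]])
  show "-1 + real (sdeg l) \<le> 0" if "l \<in> Jidx d" for l
    using sdeg_le_1_if_Jidx[OF that] by simp
qed

lemma weight_bounded_const:
  assumes "\<And>\<phi> \<psi>. g \<phi> = g \<psi>"
  shows "weight_bounded d a g 0"
proof (rule weight_bounded_if_depends_on)
  show "depends_on {} (lift g)"
    unfolding depends_on_def lift_def by (intro allI impI ext assms)
qed simp

lemma weight_bounded_if_indep_grad:
  assumes "\<And>\<phi> \<psi>. \<phi> (zero_mi d) = \<psi> (zero_mi d) \<Longrightarrow> g \<phi> = g \<psi>"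
  shows "weight_bounded d 0 g 0"
proof (rule weight_bounded_if_depends_on)
  show "depends_on {zero_mi d} (lift g)"
    unfolding depends_on_def lift_def by (intro allI impI ext assms) simp
qed (simp add: sdeg_zero_mi)

text \<open>With \<open>\<alpha> = 2/(p-1)\<close> the weight bound falls short of \<open>|\<tau>|\<^sub>\<s> + \<alpha> + 2\<close> by a positive
  amount per noise vertex, which pays for \<open>\<alpha>\<close> times the number of extra derivatives.\<close>

lemma hom_gt_if_weight_bound_alpha:
  fixes \<alpha> \<beta> :: real
  assumes "\<alpha> > 0" "\<beta> > -\<alpha> - 2" "length ks \<ge> 1" "noise_count \<tau> > 0 \<or> length ks \<ge> 2"
    and "\<alpha> * length ks + sdeg_list ks \<le> weight_bound \<alpha> (\<alpha> + 2) 0 \<tau>"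
  shows "hom \<beta> \<tau> > real (sdeg_list ks) - 2"
proof -
  have "0 \<le> \<alpha> * (real (length ks) - 1)" using assms(1,3) by simp
  moreover have "0 \<le> noise_count \<tau> * (\<beta> + \<alpha> + 2)" using assms(2) by simp
  moreover have "0 < \<alpha> * (real (length ks) - 1) \<or> 0 < noise_count \<tau> * (\<beta> + \<alpha> + 2)"
    using assms(1,2,4) by auto
  ultimately have "0 < \<alpha> * (real (length ks) - 1) + noise_count \<tau> * (\<beta> + \<alpha> + 2)" by linarith
  then show ?thesis using assms(5) weight_bound_eq_hom[of \<alpha> 0 \<tau> \<beta>] by (simp add: algebra_simps)
qed

lemma hom_gt_if_weight_bound_neg1:
  fixes \<beta> :: real
  assumes "length ks = 1" "noise_count \<tau> > 0 \<longrightarrow> \<beta> > -1"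
    and "-1 * length ks + sdeg_list ks \<le> weight_bound (-1) 0 0 \<tau>"
  shows "hom \<beta> \<tau> > real (sdeg_list ks) - 2"
proof -
  define c where "c = (if noise_count \<tau> > 0 then max 0 (-\<beta>) else 0)"
  have "c < 1" using assms(2) by (simp add: c_def)
  moreover have "weight_bound (-1) 0 0 \<tau> \<le> hom \<beta> \<tau> + c"
    by (rule weight_bound_le_hom) (use \<open>c < 1\<close> in \<open>auto simp: c_def\<close>)
  ultimately show ?thesis using assms(1,3) by simp
qed

lemma hom_gt_if_weight_bound_0:
  fixes \<beta> :: real
  assumes "\<beta> > -2" "sdeg_list ks \<le> weight_bound 0 1 0 \<tau>"
  shows "hom \<beta> \<tau> > real (sdeg_list ks) - 2"
proof -
  have "weight_bound 0 1 0 \<tau> \<le> hom \<beta> \<tau> + max 1 (-\<beta>)"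
    by (rule weight_bound_le_hom) (use assms(1) in auto)
  moreover have "max 1 (-\<beta>) < 2" using assms(1) by simp
  ultimately show ?thesis using assms(2) by linarith
qed

theorem lemma6:
  fixes d n p q :: nat
    and \<beta> :: real
    and F :: "'e::euclidean_space list \<Rightarrow> 'e"
    and B :: "nat \<Rightarrow> 'e list \<Rightarrow> 'e"
    and P :: "'e jet \<Rightarrow> 'e"
    and f :: "nat \<Rightarrow> 'e jet \<Rightarrow> 'e"
    and \<tau> :: tree
    and ks :: "mi list"
  assumes "d \<ge> 2" and "n \<ge> 1" and "\<beta> < 0"
    and "p \<ge> 2" and "multilin p F"
    and "P = Fterm d p F \<or>
         (odd p \<and> q = (p - 1) div 2 \<and> (\<forall>i. multilin (q + 1) (B i)) \<and>
          P = (\<lambda>\<phi>. Fterm d p F \<phi> + Bterm d q B \<phi>))"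
    and "\<forall>j\<in>{1..n}. smooth_jet d (f j) \<and> on_J d (f j)"
    and "f_const n f \<longrightarrow> \<beta> > - (2 / (real p - 1)) - 2"
    and "\<not> f_const n f \<and> f_indep_grad d n f \<longrightarrow> \<beta> > -2"
    and "\<not> f_indep_grad d n f \<longrightarrow> \<beta> > -1"
    and "conforming d n P f \<tau>"
    and "set ks \<subseteq> mindex d" and "length ks \<ge> 1"
    and "Dnonzero ks (lift (Ups d P f \<tau>))"
    and "length ks = 1 \<or> \<beta> \<le> -1"
  shows "hom \<beta> \<tau> > real (sdeg_list ks) - 2"
proof -
  have regf: "jet_regular d 0 (lift (f j))" if "j \<in> {1..n}" for j
    using assms(7) that jet_regular_if_on_J by blast
  have tree: "a * length ks + sdeg_list ks \<le> weight_bound a W0 Wf \<tau>"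
    if "a \<ge> -1" "weight_bounded d a P W0" "\<And>j. j \<in> {1..n} \<Longrightarrow> weight_bounded d a (f j) Wf" for a W0 Wf
    using weight_bounded_Ups[OF that(1) jet_regular_lift_P[OF assms(5,6)] that(2) regf that(3) assms(11)]
      assms(12,14) unfolding weight_bounded_def by blast
  note P = weight_bounded_P[OF assms(5,6)]
  have fJ: "weight_bounded d (-1) (f j) 0" if "j \<in> {1..n}" for j
    using assms(7) that weight_bounded_if_on_J by blast
  have one_derivative: "?thesis" if "length ks = 1" "noise_count \<tau> > 0 \<longrightarrow> \<beta> > -1"
    using hom_gt_if_weight_bound_neg1[OF that] tree[OF _ P(1) fJ] by simp
  consider (const) "f_const n f" | (phi_only) "\<not> f_const n f" "f_indep_grad d n f"
    | (gradient) "\<not> f_indep_grad d n f"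
    by blast
  then show ?thesis
  proof cases
    case const
    define \<alpha> where "\<alpha> = 2 / (real p - 1)"
    have \<alpha>: "\<alpha> > 0" "\<beta> > -\<alpha> - 2" using assms(4,8) const by (simp_all add: \<alpha>_def)
    have "weight_bounded d \<alpha> (f j) 0" if "j \<in> {1..n}" for j
      using const that unfolding f_const_def by (intro weight_bounded_const) blast
    moreover have "-1 \<le> \<alpha>" using \<alpha> by simp
    ultimately have bound: "\<alpha> * length ks + sdeg_list ks \<le> weight_bound \<alpha> (\<alpha> + 2) 0 \<tau>"
      using tree[OF _ P(3)[OF assms(4)]] unfolding \<alpha>_def by blast
    show ?thesis
    proof (cases "noise_count \<tau> > 0 \<or> length ks \<ge> 2")
      case True
      then show ?thesis by (rule hom_gt_if_weight_bound_alpha[OF \<alpha> assms(13) _ bound])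
    next
      case False
      then show ?thesis using one_derivative assms(13) by simp
    qed
  next
    case phi_only
    have "weight_bounded d 0 (f j) 0" if "j \<in> {1..n}" for j
      using phi_only that unfolding f_indep_grad_def by (intro weight_bounded_if_indep_grad) blast
    then have "sdeg_list ks \<le> weight_bound 0 1 0 \<tau>" using tree[OF _ P(2)] by simp
    moreover have "\<beta> > -2" using assms(9) phi_only by simp
    ultimately show ?thesis using hom_gt_if_weight_bound_0 by blast
  next
    case gradient
    then have "\<beta> > -1" using assms(10) by simp
    moreover have "length ks = 1" using assms(15) \<open>\<beta> > -1\<close> by linarith
    ultimately show ?thesis using one_derivative by simp
  qed
qed

end
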